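(* Let $q$ be a prime power and $n\ge 3$ an integer. The matroid $\overline{\mathrm{PG}}(n-1,q)$ is $\mathrm{GF}(q)$-regular, i.e. it is representable over every field having $\mathrm{GF}(q)$ as a proper subfield.
   Context: Let $\mathbb F$ be a field with a $\mathrm{GF}(q)$-subfield, let $A$ be a $\mathrm{GF}(q)$-matrix with $n$ rows whose columns (indexed by $E(N)$) represent $N\cong \mathrm{PG}(n-1,q)$. Let $L_0$ be a line of $N$, $v\in \mathrm{col}_{\mathbb F}(A[L_0])$ a vector not parallel to any column of $A[L_0]$, $f\in E(N)-L_0$, and $\mathcal L$ the set of lines of $N$ in $\mathrm{cl}_N(L_0\cup\{f\})$ not containing $f$. For each $L\in\mathcal L$ let $v_L$ be a nonzero vector in $\mathrm{col}_{\mathbb F}(A[L])\cap\mathrm{col}_{\mathbb F}(v\,|\,A[f])$, and let $\overline A$ be $A$ with one new column $x_L=v_L$ appended for each $L\in\mathcal L$. The matroid represented by the columns of $\overline A$ is, up to isomorphism, independent of all choices (including $\mathbb F$); $\overline{\mathrm{PG}}(n-1,q)$ denotes any matroid isomorphic to it. *)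

theory Defs
  imports "HOL-Computational_Algebra.Primes"
begin

text \<open>Vectors over a field are functions nat => 'a (coordinates indexed by rows);
  a matrix is a family of columns indexed by ground-set elements.\<close>

definition subfield :: "'a::field set \<Rightarrow> bool" where
  "subfield S \<longleftrightarrow> 0 \<in> S \<and> 1 \<in> S \<and> (\<forall>x\<in>S. \<forall>y\<in>S. x + y \<in> S \<and> x * y \<in> S)
     \<and> (\<forall>x\<in>S. - x \<in> S \<and> inverse x \<in> S)"

text \<open>Linear independence of the family of columns (V i) for i in X (repeats count as dependent).\<close>
definition lin_indep_fam :: "('i \<Rightarrow> nat \<Rightarrow> 'a::field) \<Rightarrow> 'i set \<Rightarrow> bool" where
  "lin_indep_fam V X \<longleftrightarrow> finite X \<and>
     (\<forall>c. (\<forall>j. (\<Sum>i\<in>X. c i * V i j) = 0) \<longrightarrow> (\<forall>i\<in>X. c i = 0))"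

definition vspan :: "(nat \<Rightarrow> 'a::field) set \<Rightarrow> (nat \<Rightarrow> 'a) set" where
  "vspan W = {w. \<exists>c. \<forall>j. w j = (\<Sum>u\<in>W. c u * u j)}"

definition parallel :: "(nat \<Rightarrow> 'a::field) \<Rightarrow> (nat \<Rightarrow> 'a) \<Rightarrow> bool" where
  "parallel u w \<longleftrightarrow> (\<exists>c. u = (\<lambda>j. c * w j))"

text \<open>The columns A e (e in E) form an S-matrix with n rows representing PG(n-1,|S|):
  nonzero S-vectors in S^n, pairwise non-parallel, one for every point.\<close>
definition is_PG_rep :: "'a::field set \<Rightarrow> nat \<Rightarrow> ('e \<Rightarrow> nat \<Rightarrow> 'a) \<Rightarrow> 'e set \<Rightarrow> bool" where
  "is_PG_rep S n A E \<longleftrightarrow>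
     (\<forall>e\<in>E. (\<forall>j. A e j \<in> S) \<and> (\<forall>j. n \<le> j \<longrightarrow> A e j = 0) \<and> A e \<noteq> (\<lambda>j. 0)) \<and>
     (\<forall>e\<in>E. \<forall>e'\<in>E. e \<noteq> e' \<longrightarrow> \<not> parallel (A e) (A e')) \<and>
     (\<forall>w. (\<forall>j. w j \<in> S) \<and> (\<forall>j. n \<le> j \<longrightarrow> w j = 0) \<and> w \<noteq> (\<lambda>j. 0)
          \<longrightarrow> (\<exists>e\<in>E. parallel w (A e)))"

definition mcl :: "('e \<Rightarrow> nat \<Rightarrow> 'a::field) \<Rightarrow> 'e set \<Rightarrow> 'e set \<Rightarrow> 'e set" where
  "mcl A E X = {e\<in>E. A e \<in> vspan (A ` X)}"

definition is_line :: "('e \<Rightarrow> nat \<Rightarrow> 'a::field) \<Rightarrow> 'e set \<Rightarrow> 'e set \<Rightarrow> bool" where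
  "is_line A E L \<longleftrightarrow> (\<exists>a\<in>E. \<exists>b\<in>E. a \<noteq> b \<and> L = mcl A E {a, b})"

definition lines_off :: "('e \<Rightarrow> nat \<Rightarrow> 'a::field) \<Rightarrow> 'e set \<Rightarrow> 'e set \<Rightarrow> 'e \<Rightarrow> 'e set set" where
  "lines_off A E L0 f = {L. is_line A E L \<and> L \<subseteq> mcl A E (L0 \<union> {f}) \<and> f \<notin> L}"

text \<open>Ground set and columns of the extended matrix A-bar: the old columns (Inl e)
  plus one new column x_L = v_L for each L in \<L> (Inr L).\<close>
definition pgbar_ground :: "'e set \<Rightarrow> 'e set set \<Rightarrow> ('e + 'e set) set" where
  "pgbar_ground E Ls = Inl ` E \<union> Inr ` Ls"

definition pgbar_cols :: "('e \<Rightarrow> nat \<Rightarrow> 'a) \<Rightarrow> ('e set \<Rightarrow> nat \<Rightarrow> 'a) \<Rightarrow> ('e + 'e set) \<Rightarrow> nat \<Rightarrow> 'a" where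
  "pgbar_cols A vL = case_sum A vL"

end

theory Submission
  imports Defs "HOL-Algebra.Multiplicative_Group" "HOL-Computational_Algebra.Polynomial"
begin

text \<open>Two subfields of order \<open>q\<close> are isomorphic: a root of the minimal integer polynomial of a
  generator of the multiplicative group of one lies in the other. Since a dependence among
  \<open>GF(q)\<close>-vectors is already witnessed by \<open>GF(q)\<close>-coefficients, such an isomorphism \<open>\<sigma>\<close> carries
  \<open>A\<close> to a matrix \<open>A'\<close> over the target field with the same matroid. There \<open>v' = A' a + u A' b\<close>
  with \<open>u\<close> outside the subfield plays the role of \<open>v\<close>, and each new column is chosen on its
  line and on the line through \<open>v'\<close> and \<open>A' f\<close>.

  A dependent set of the extension is dependent on its old columns, or contains three new
  columns (all in the span of \<open>v\<close> and \<open>A f\<close>), or its relation involves one or two new columns.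
  In the last cases the geometry of the plane \<open>cl(L0 \<union> {f})\<close>, where \<open>f\<close> is the only point of \<open>N\<close>
  on the line through \<open>v\<close> and \<open>A f\<close>, forces a dependence on the other side as well. The
  argument is symmetric in the two fields, so the column matroids coincide.\<close>

section \<open>Finite subfields\<close>

lemma subfield_closed:
  assumes "subfield S"
  shows "0 \<in> S" "1 \<in> S" "x \<in> S \<Longrightarrow> y \<in> S \<Longrightarrow> x + y \<in> S" "x \<in> S \<Longrightarrow> y \<in> S \<Longrightarrow> x * y \<in> S"
    "x \<in> S \<Longrightarrow> - x \<in> S" "x \<in> S \<Longrightarrow> inverse x \<in> S"
    "x \<in> S \<Longrightarrow> y \<in> S \<Longrightarrow> x - y \<in> S" "x \<in> S \<Longrightarrow> y \<in> S \<Longrightarrow> x / y \<in> S"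
  using assms unfolding subfield_def
  by (auto simp: divide_inverse) (metis diff_conv_add_uminus)

lemma subfield_sum: "subfield S \<Longrightarrow> (\<And>i. i \<in> I \<Longrightarrow> f i \<in> S) \<Longrightarrow> sum f I \<in> S"
  by (induct I rule: infinite_finite_induct) (auto intro: subfield_closed)

lemma subfield_of_nat: "subfield S \<Longrightarrow> of_nat n \<in> S"
  by (induct n) (auto intro: subfield_closed)

lemma subfield_of_int: "subfield S \<Longrightarrow> of_int z \<in> S"
  by (cases z rule: int_cases) (auto intro: subfield_closed subfield_of_nat)

definition subfield_ring :: "'a::field set \<Rightarrow> 'a ring" where
  "subfield_ring S = \<lparr>carrier = S, monoid.mult = (*), one = 1, ring.zero = 0, add = (+)\<rparr>"

lemma field_subfield_ring:
  assumes "subfield S"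
  shows "field (subfield_ring S)"
proof -
  note c = subfield_closed[OF assms]
  have units: "Units (subfield_ring S) = S - {0}"
  proof
    show "Units (subfield_ring S) \<subseteq> S - {0}"
      by (auto simp: Units_def subfield_ring_def)
    show "S - {0} \<subseteq> Units (subfield_ring S)"
    proof
      fix x assume x: "x \<in> S - {0}"
      then have "inverse x \<in> S" "x * inverse x = 1" "inverse x * x = 1" using c by auto
      then show "x \<in> Units (subfield_ring S)"
        using x unfolding Units_def subfield_ring_def by (auto intro!: bexI[of _ "inverse x"])
    qed
  qed
  have "cring (subfield_ring S)"
  proof (rule cringI)
    show "abelian_group (subfield_ring S)"
      by (rule abelian_groupI) (use c in \<open>auto simp: subfield_ring_def intro!: bexI[of _ "- _"]\<close>)
    show "comm_monoid (subfield_ring S)"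
      by (rule comm_monoidI) (use c in \<open>auto simp: subfield_ring_def algebra_simps\<close>)
  qed (auto simp: subfield_ring_def algebra_simps)
  then show ?thesis
  proof (intro field.intro domain.intro field_axioms.intro domain_axioms.intro)
    show "Units (subfield_ring S) = carrier (subfield_ring S) - {\<zero>\<^bsub>subfield_ring S\<^esub>}"
      using units by (simp add: subfield_ring_def)
  qed (auto simp: subfield_ring_def)
qed

lemma finite_subfield_cyclic:
  assumes "subfield S" "finite S"
  obtains \<alpha> where "\<alpha> \<in> S" "\<And>s. s \<in> S \<Longrightarrow> s \<noteq> 0 \<Longrightarrow> \<exists>k::nat. s = \<alpha> ^ k"
proof -
  let ?R = "subfield_ring S"
  have "\<exists>a\<in>carrier (mult_of ?R). carrier (mult_of ?R) = {a [^]\<^bsub>?R\<^esub> i |i::nat. i \<in> UNIV}"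
    using field.finite_field_mult_group_has_gen[OF field_subfield_ring[OF assms(1)]] assms(2)
    by (simp add: subfield_ring_def)
  then obtain a where a: "a \<in> carrier (mult_of ?R)"
    "carrier (mult_of ?R) = {a [^]\<^bsub>?R\<^esub> i |i::nat. i \<in> UNIV}" by blast
  have pow: "a [^]\<^bsub>?R\<^esub> (i::nat) = a ^ i" for i
    by (induct i) (simp_all add: subfield_ring_def mult.commute)
  have "carrier (mult_of ?R) = S - {0}" by (simp add: subfield_ring_def)
  then show ?thesis using that[of a] a pow by auto
qed

lemma of_nat_card_finite_subfield:
  fixes S :: "'a::field set"
  assumes S: "subfield S" "finite S"
  shows "(of_nat (card S) :: 'a) = 0"
proof -
  let ?g = "\<lambda>s::'a. s + 1"
  have inj: "inj_on ?g S" by (auto simp: inj_on_def)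
  moreover have "?g ` S \<subseteq> S" using subfield_closed[OF S(1)] by auto
  ultimately have img: "?g ` S = S" using S(2) card_image[OF inj] by (simp add: card_subset_eq)
  have "sum (\<lambda>s. s) S = sum (\<lambda>s. s) (?g ` S)" using img by simp
  also have "\<dots> = sum (\<lambda>s. s + 1) S" using sum.reindex[OF inj] by simp
  also have "\<dots> = sum (\<lambda>s. s) S + of_nat (card S)" by (simp add: sum.distrib)
  finally show ?thesis by simp
qed

lemma power_card_finite_subfield:
  fixes S :: "'a::field set"
  assumes S: "subfield S" "finite S" and s: "s \<in> S"
  shows "s ^ card S = s"
proof (cases "s = 0")
  case True
  moreover have "card S \<noteq> 0" using S s by auto
  ultimately show ?thesis by simp
next
  case False
  let ?S = "S - {0}" and ?g = "\<lambda>x. s * x"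
  have inj: "inj_on ?g ?S" using False by (auto simp: inj_on_def)
  moreover have "?g ` ?S \<subseteq> ?S" using subfield_closed[OF S(1)] s False by auto
  ultimately have img: "?g ` ?S = ?S" using S(2) card_image[OF inj] by (simp add: card_subset_eq)
  have "prod (\<lambda>x. x) ?S = prod (\<lambda>x. x) (?g ` ?S)" using img by simp
  also have "\<dots> = prod (\<lambda>x. s * x) ?S" using prod.reindex[OF inj] by simp
  also have "\<dots> = s ^ card ?S * prod (\<lambda>x. x) ?S" by (simp add: prod.distrib)
  finally have "s ^ card ?S = 1" using S(2) by (simp add: prod_zero_iff)
  moreover have "card S = Suc (card ?S)" using S subfield_closed(1)[OF S(1)] by (metis card_Suc_Diff1)
  ultimately show ?thesis by simp
qed

definition ipoly :: "int poly \<Rightarrow> 'a::field \<Rightarrow> 'a" where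
  "ipoly g x = poly (map_poly of_int g) x"

lemma map_poly_of_int_add: "map_poly of_int (f + g) = (map_poly of_int f + map_poly of_int g :: 'a::comm_ring_1 poly)"
  by (intro poly_eqI) (simp add: coeff_map_poly)

lemma map_poly_of_int_diff: "map_poly of_int (f - g) = (map_poly of_int f - map_poly of_int g :: 'a::comm_ring_1 poly)"
  by (intro poly_eqI) (simp add: coeff_map_poly)

lemma map_poly_of_int_mult: "map_poly of_int (f * g) = (map_poly of_int f * map_poly of_int g :: 'a::comm_ring_1 poly)"
  by (intro poly_eqI) (simp add: coeff_map_poly coeff_mult of_int_sum)

lemma ipoly_add: "ipoly (f + g) x = ipoly f x + ipoly g x"
  by (simp add: ipoly_def map_poly_of_int_add)

lemma ipoly_diff: "ipoly (f - g) x = ipoly f x - ipoly g x"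
  by (simp add: ipoly_def map_poly_of_int_diff)

lemma ipoly_mult: "ipoly (f * g) x = ipoly f x * ipoly g x"
  by (simp add: ipoly_def map_poly_of_int_mult)

lemma ipoly_monom: "ipoly (monom c n) x = of_int c * x ^ n"
  by (simp add: ipoly_def map_poly_monom poly_monom)

lemma ipoly_smult: "ipoly (smult c f) x = of_int c * ipoly f x"
  by (simp add: ipoly_def map_poly_smult)

lemma ipoly_0 [simp]: "ipoly 0 x = 0"
  by (simp add: ipoly_def)

lemma ipoly_1 [simp]: "ipoly 1 x = 1"
  by (simp add: ipoly_def)

lemma ipoly_pCons: "ipoly (pCons a g) x = of_int a + x * ipoly g x"
  by (simp add: ipoly_def map_poly_pCons)

lemma ipoly_in_subfield: "subfield S \<Longrightarrow> x \<in> S \<Longrightarrow> ipoly g x \<in> S"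
  by (induct g rule: pCons_induct) (auto simp: ipoly_pCons intro!: subfield_closed subfield_of_int)

lemma ipoly_eq_0_if_coeffs_dvd:
  assumes "(of_nat p :: 'a::field) = 0" "\<forall>i. int p dvd coeff r i"
  shows "ipoly r (x::'a) = 0"
proof -
  have "map_poly (of_int :: int \<Rightarrow> 'a) r = 0"
  proof (intro poly_eqI)
    fix i
    obtain z where "coeff r i = int p * z" using assms(2) by (meson dvdE)
    then show "coeff (map_poly (of_int :: int \<Rightarrow> 'a) r) i = coeff 0 i"
      using assms(1) by (simp add: coeff_map_poly)
  qed
  then show ?thesis by (simp add: ipoly_def)
qed

lemma monic_int_poly_divide:
  fixes g m :: "int poly"
  assumes "lead_coeff m = 1"
  obtains h r where "g = m * h + r" "r = 0 \<or> degree r < degree m"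
proof -
  have m0: "m \<noteq> 0" using assms by auto
  obtain h r where hr: "pseudo_divmod g m = (h, r)" by (cases "pseudo_divmod g m")
  from pseudo_divmod[OF m0 hr] assms that show ?thesis by auto
qed

text \<open>Below the least degree \<open>d0\<close> of a monic integer polynomial with root \<open>\<alpha>\<close>, every integer
  polynomial with root \<open>\<alpha>\<close> vanishes modulo \<open>p\<close>: a leading coefficient prime to \<open>p\<close> could be
  normalised to \<open>1\<close> modulo \<open>p\<close>, giving a monic polynomial of smaller degree.\<close>

lemma ipoly_root_coeffs_dvd:
  fixes \<alpha> :: "'a::field"
  assumes p: "prime p" "(of_nat p :: 'a) = 0"
    and min: "\<And>m. lead_coeff m = 1 \<Longrightarrow> ipoly m \<alpha> = 0 \<Longrightarrow> d0 \<le> degree m"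
    and r: "r = 0 \<or> degree r < d0" "ipoly r \<alpha> = 0"
  shows "int p dvd coeff r i"
  using r
proof (induction "degree r" arbitrary: r i rule: less_induct)
  case less
  show ?case
  proof (cases "r = 0")
    case False
    define c where "c = lead_coeff r"
    define d where "d = degree r"
    have d0: "d < d0" using less.prems False by (simp add: d_def)
    show ?thesis
    proof (cases "int p dvd c")
      case True
      define r2 where "r2 = r - monom c d"
      have "degree r2 \<le> d" unfolding r2_def d_def
        by (intro degree_diff_le) (auto intro: degree_monom_le)
      moreover have "coeff r2 d = 0" by (simp add: r2_def c_def d_def)
      ultimately have r2d: "r2 = 0 \<or> degree r2 < d" by (metis le_neq_implies_less leading_coeff_0_iff)
      have "(of_int c :: 'a) = 0" using True p(2) by (auto elim!: dvdE)
      then have "ipoly r2 \<alpha> = 0" using less.prems by (simp add: r2_def ipoly_diff ipoly_monom)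
      then have "int p dvd coeff r2 i"
        using r2d less.hyps[of r2] d0 by (cases "r2 = 0") (auto simp: d_def)
      then have "int p dvd coeff r2 i + coeff (monom c d) i"
        using True by (auto simp: coeff_monom)
      then show ?thesis by (simp add: r2_def)
    next
      case False
      have "coprime c (int p)"
        using False p(1) by (metis coprime_commute prime_imp_coprime_int prime_nat_int_transfer)
      then obtain u v where uv: "u * c + v * int p = 1" using bezout_int[of c "int p"] by auto
      define m where "m = smult u r + monom (1 - u * c) d"
      have "degree m \<le> d" unfolding m_def d_def
        by (intro degree_add_le) (auto intro: degree_monom_le order.trans[OF degree_smult_le])
      moreover have cm: "coeff m d = 1" by (simp add: m_def c_def d_def)
      ultimately have "degree m = d" by (metis antisym le_degree one_neq_zero)
      moreover have "(of_int (1 - u * c) :: 'a) = 0" using uv p(2) by (simp flip: uv)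
      then have "ipoly m \<alpha> = 0" using less.prems by (simp add: m_def ipoly_add ipoly_smult ipoly_monom)
      ultimately show ?thesis using min[of m] cm d0 by simp
    qed
  qed simp
qed

lemma ipoly_root_transfer:
  fixes \<alpha> :: "'a::field" and \<beta> :: "'b::field"
  assumes p: "prime p" "(of_nat p :: 'a) = 0" "(of_nat p :: 'b) = 0"
    and m: "lead_coeff m = 1" "ipoly m \<alpha> = 0" "ipoly m \<beta> = 0"
    and min: "\<And>m'. lead_coeff m' = 1 \<Longrightarrow> ipoly m' \<alpha> = 0 \<Longrightarrow> degree m \<le> degree m'"
    and g: "ipoly g \<alpha> = 0"
  shows "ipoly g \<beta> = 0"
proof -
  obtain h r where hr: "g = m * h + r" "r = 0 \<or> degree r < degree m"
    using monic_int_poly_divide[OF m(1)] by blast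
  have "ipoly r \<alpha> = 0" using g hr(1) m(2) by (simp add: ipoly_add ipoly_mult)
  then have "ipoly r \<beta> = 0"
    using ipoly_eq_0_if_coeffs_dvd[OF p(3)] ipoly_root_coeffs_dvd[OF p(1,2) min hr(2)] by blast
  then show ?thesis using hr(1) m(3) by (simp add: ipoly_add ipoly_mult)
qed

lemma degree_X_power_minus_X:
  assumes "2 \<le> q"
  shows "degree (monom 1 q - monom 1 1 :: int poly) = q" "lead_coeff (monom 1 q - monom 1 1 :: int poly) = 1"
proof -
  let ?M = "monom 1 q - monom 1 1 :: int poly"
  have c: "coeff ?M q = 1" "\<And>i. i > q \<Longrightarrow> coeff ?M i = 0"
    using assms by (auto simp: coeff_monom)
  show d: "degree ?M = q"
  proof (rule antisym)
    show "degree ?M \<le> q" using c(2) by (meson degree_le not_le_imp_less)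
    show "q \<le> degree ?M" using c(1) by (intro le_degree) simp
  qed
  show "lead_coeff ?M = 1" using c(1) d by simp
qed

text \<open>Every element of \<open>T\<close> is a root of \<open>X\<^sup>q - X\<close>, which modulo \<open>p\<close> is divisible by the minimal
  polynomial \<open>m\<close> of \<open>\<alpha>\<close>; the cofactor has fewer than \<open>q\<close> roots, so \<open>m\<close> has a root in \<open>T\<close>.\<close>

lemma min_poly_has_root_in_subfield:
  fixes \<alpha> :: "'a::field" and T :: "'b::field set"
  assumes p: "prime p" "(of_nat p :: 'a) = 0" "(of_nat p :: 'b) = 0"
    and q: "2 \<le> q" "\<alpha> ^ q = \<alpha>" and T: "finite T" "card T = q" "\<And>t. t \<in> T \<Longrightarrow> t ^ q = t"
    and m: "lead_coeff m = 1" "ipoly m \<alpha> = 0"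
    and min: "\<And>m'. lead_coeff m' = 1 \<Longrightarrow> ipoly m' \<alpha> = 0 \<Longrightarrow> degree m \<le> degree m'"
  obtains \<beta> where "\<beta> \<in> T" "ipoly m \<beta> = 0"
proof -
  define M :: "int poly" where "M = monom 1 q - monom 1 1"
  have dM: "degree M = q" and cM: "coeff M q = 1"
    using degree_X_power_minus_X[OF q(1)] by (simp_all add: M_def)
  have eM: "ipoly M x = x ^ q - x" for x :: "'c::field"
    by (simp add: M_def ipoly_diff ipoly_monom)
  obtain h r where hr: "M = m * h + r" "r = 0 \<or> degree r < degree m"
    using monic_int_poly_divide[OF m(1)] by blast
  have "ipoly r \<alpha> = 0" using eM[of \<alpha>] q(2) m(2) unfolding hr(1) by (simp add: ipoly_add ipoly_mult)
  then have r0: "ipoly r (x::'b) = 0" for x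
    using ipoly_eq_0_if_coeffs_dvd[OF p(3)] ipoly_root_coeffs_dvd[OF p(1,2) min hr(2)] by blast
  have mq: "degree m \<le> q"
    using min[of M] degree_X_power_minus_X[OF q(1), folded M_def] eM[of \<alpha>] q(2) by simp
  have m0: "0 < degree m"
  proof (rule ccontr)
    assume "\<not> 0 < degree m"
    then have "m = 1" using m(1) by (intro poly_eqI) (auto simp: coeff_1 coeff_eq_0)
    then show False using m(2) by simp
  qed
  have h0: "h \<noteq> 0"
  proof
    assume "h = 0"
    then have "M = r" using hr by simp
    then show False using hr(2) dM mq q(1) by auto
  qed
  have dmh: "degree (m * h) = degree m + degree h"
    using degree_mult_eq[of m h] h0 m(1) by (metis leading_coeff_0_iff one_neq_zero)
  have dMmh: "degree M = degree (m * h)"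
  proof (cases "r = 0")
    case False
    then have "degree r < degree (m * h)" using hr(2) dmh by auto
    then show ?thesis using hr(1) by (simp add: degree_add_eq_left)
  qed (use hr in simp)
  have lh: "lead_coeff h = 1"
  proof -
    have "coeff M q = coeff (m * h) (degree m + degree h) + coeff r (degree m + degree h)"
      using hr(1) dM dMmh dmh by simp
    moreover have "coeff r (degree m + degree h) = 0"
      using hr(2) by (auto intro: coeff_eq_0)
    moreover have "coeff (m * h) (degree m + degree h) = lead_coeff h"
      using coeff_mult_degree_sum[of m h] m(1) by simp
    ultimately show ?thesis using cM by simp
  qed
  have dh: "degree h < q" using dM dMmh dmh m0 by simp
  have "\<exists>\<beta>\<in>T. ipoly m \<beta> = 0"
  proof (rule ccontr)
    assume nr: "\<not> (\<exists>\<beta>\<in>T. ipoly m \<beta> = 0)"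
    let ?h = "map_poly (of_int :: int \<Rightarrow> 'b) h"
    have h'0: "?h \<noteq> 0" using lh by (metis coeff_0 coeff_map_poly of_int_0 of_int_1 one_neq_zero)
    have "T \<subseteq> {x. poly ?h x = 0}"
    proof
      fix t assume t: "t \<in> T"
      have "ipoly m t * ipoly h t = 0"
        using eM[of t] T(3)[OF t] r0 unfolding hr(1) by (simp add: ipoly_add ipoly_mult)
      then show "t \<in> {x. poly ?h x = 0}" using nr t by (auto simp: ipoly_def)
    qed
    then have "card T \<le> card {x. poly ?h x = 0}" by (rule card_mono[OF poly_roots_finite[OF h'0]])
    also have "\<dots> \<le> degree h" using card_poly_roots_bound[OF h'0] map_poly_degree_leq order_trans by blast
    finally show False using dh T(2) by simp
  qed
  then show ?thesis using that by blast
qed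

locale subfield_iso =
  fixes S :: "'a::field set" and T :: "'b::field set" and \<sigma> :: "'a \<Rightarrow> 'b"
  assumes subfield_S: "subfield S" and subfield_T: "subfield T" and bij: "bij_betw \<sigma> S T"
    and map_1: "\<sigma> 1 = 1"
    and map_add: "x \<in> S \<Longrightarrow> y \<in> S \<Longrightarrow> \<sigma> (x + y) = \<sigma> x + \<sigma> y"
    and map_mult: "x \<in> S \<Longrightarrow> y \<in> S \<Longrightarrow> \<sigma> (x * y) = \<sigma> x * \<sigma> y"
begin

lemma map_in: "x \<in> S \<Longrightarrow> \<sigma> x \<in> T"
  using bij by (auto simp: bij_betw_def)

lemma map_eq_iff: "x \<in> S \<Longrightarrow> y \<in> S \<Longrightarrow> \<sigma> x = \<sigma> y \<longleftrightarrow> x = y"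
  using bij by (auto simp: bij_betw_def inj_on_def)

lemma map_0: "\<sigma> 0 = 0"
  using map_add[of 0 0] subfield_closed(1)[OF subfield_S] by (metis add.right_neutral add_left_cancel)

lemma map_eq_0_iff: "x \<in> S \<Longrightarrow> \<sigma> x = 0 \<longleftrightarrow> x = 0"
  using map_eq_iff[of x 0] map_0 subfield_closed(1)[OF subfield_S] by simp

lemma map_inverse: "x \<in> S \<Longrightarrow> \<sigma> (inverse x) = inverse (\<sigma> x)"
proof (cases "x = 0")
  case False
  assume x: "x \<in> S"
  then have "\<sigma> x * \<sigma> (inverse x) = 1"
    using map_mult[of x "inverse x"] subfield_closed[OF subfield_S] False map_1 by simp
  then show ?thesis by (rule inverse_unique[symmetric])
qed (simp add: map_0)

lemma map_divide: "x \<in> S \<Longrightarrow> y \<in> S \<Longrightarrow> \<sigma> (x / y) = \<sigma> x / \<sigma> y"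
  using map_mult[of x "inverse y"] map_inverse[of y] subfield_closed[OF subfield_S]
  by (simp add: divide_inverse)

lemma map_sum: "(\<And>i. i \<in> I \<Longrightarrow> f i \<in> S) \<Longrightarrow> \<sigma> (sum f I) = (\<Sum>i\<in>I. \<sigma> (f i))"
proof (induct I rule: infinite_finite_induct)
  case (insert i I)
  then show ?case by (simp add: map_add subfield_sum[OF subfield_S])
qed (simp_all add: map_0)

lemma inv: "subfield_iso T S (inv_into S \<sigma>)"
proof -
  let ?i = "inv_into S \<sigma>"
  have iT: "y \<in> T \<Longrightarrow> ?i y \<in> S" for y using bij by (metis bij_betw_imp_surj_on inv_into_into)
  have fi: "y \<in> T \<Longrightarrow> \<sigma> (?i y) = y" for y using bij by (meson bij_betw_inv_into_right)
  have ifx: "x \<in> S \<Longrightarrow> ?i (\<sigma> x) = x" for x using bij by (meson bij_betw_inv_into_left)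
  note cS = subfield_closed[OF subfield_S]
  have "?i (a + b) = ?i a + ?i b" "?i (a * b) = ?i a * ?i b" if "a \<in> T" "b \<in> T" for a b
    using ifx[of "?i a + ?i b"] ifx[of "?i a * ?i b"] map_add[of "?i a" "?i b"] map_mult[of "?i a" "?i b"]
      iT[OF that(1)] iT[OF that(2)] fi that cS by simp_all
  moreover have "?i 1 = 1" using ifx[of 1] map_1 cS by simp
  ultimately show ?thesis
    using subfield_S subfield_T bij_betw_inv_into[OF bij] by (simp add: subfield_iso_def)
qed

end

lemma subfield_iso_of_ipoly_kernel:
  fixes \<alpha> :: "'a::field" and \<beta> :: "'b::field"
  assumes S: "subfield S" "finite S" "\<alpha> \<in> S" "\<And>s. s \<in> S \<Longrightarrow> s \<noteq> 0 \<Longrightarrow> \<exists>k::nat. s = \<alpha> ^ k"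
    and T: "subfield T" "finite T" "card T = card S" "\<beta> \<in> T"
    and ker: "\<And>g. ipoly g \<alpha> = 0 \<Longrightarrow> ipoly g \<beta> = 0"
  obtains \<sigma> where "subfield_iso S T \<sigma>"
proof -
  have rep: "\<exists>g. ipoly g \<alpha> = s" if s: "s \<in> S" for s
  proof (cases "s = 0")
    case True
    then show ?thesis by (intro exI[of _ "0 :: int poly"]) simp
  next
    case False
    then obtain k where "s = \<alpha> ^ k" using S(4) s by blast
    then show ?thesis by (intro exI[of _ "monom 1 k"]) (simp add: ipoly_monom)
  qed
  define \<sigma> where "\<sigma> s = ipoly (SOME g. ipoly g \<alpha> = s) \<beta>" for s
  have \<sigma>: "\<sigma> s = ipoly g \<beta>" if g: "ipoly g \<alpha> = s" for g s
  proof -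
    define g0 where "g0 = (SOME g. ipoly g \<alpha> = s)"
    have "ipoly g0 \<alpha> = s" unfolding g0_def using g by (rule someI)
    then have "ipoly (g0 - g) \<alpha> = 0" using g by (simp add: ipoly_diff)
    then have "ipoly (g0 - g) \<beta> = 0" by (rule ker)
    then show ?thesis by (simp add: \<sigma>_def g0_def[symmetric] ipoly_diff)
  qed
  have map_1: "\<sigma> 1 = 1" using \<sigma>[of 1 1] by simp
  have map_add: "\<sigma> (x + y) = \<sigma> x + \<sigma> y" and map_mult: "\<sigma> (x * y) = \<sigma> x * \<sigma> y"
    if xy: "x \<in> S" "y \<in> S" for x y
  proof -
    obtain gx gy where g: "ipoly gx \<alpha> = x" "ipoly gy \<alpha> = y" using rep[OF xy(1)] rep[OF xy(2)] by blast
    have "ipoly (gx + gy) \<alpha> = x + y" "ipoly (gx * gy) \<alpha> = x * y"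
      using g by (simp_all add: ipoly_add ipoly_mult)
    from \<sigma>[OF this(1)] \<sigma>[OF this(2)]
    show "\<sigma> (x + y) = \<sigma> x + \<sigma> y" "\<sigma> (x * y) = \<sigma> x * \<sigma> y"
      using \<sigma>[OF g(1)] \<sigma>[OF g(2)] by (simp_all add: ipoly_add ipoly_mult)
  qed
  have into: "\<sigma> x \<in> T" if x: "x \<in> S" for x
  proof -
    obtain g where "ipoly g \<alpha> = x" using rep[OF x] by blast
    then show ?thesis using ipoly_in_subfield[OF T(1,4)] by (simp add: \<sigma>)
  qed
  note cS = subfield_closed[OF S(1)]
  have inj: "inj_on \<sigma> S"
  proof (rule inj_onI, rule ccontr)
    fix x y assume xy: "x \<in> S" "y \<in> S" "\<sigma> x = \<sigma> y" "x \<noteq> y"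
    have "x - y \<in> S" "inverse (x - y) \<in> S" using xy cS by auto
    have "\<sigma> x = \<sigma> y + \<sigma> (x - y)" using map_add[OF xy(2) \<open>x - y \<in> S\<close>] by simp
    then have "\<sigma> (x - y) = 0" using xy(3) by simp
    moreover have "\<sigma> (x - y) * \<sigma> (inverse (x - y)) = 1"
      using map_mult[OF \<open>x - y \<in> S\<close> \<open>inverse (x - y) \<in> S\<close>] map_1 xy(4) by simp
    ultimately show False by simp
  qed
  have "\<sigma> ` S \<subseteq> T" using into by blast
  moreover have "card (\<sigma> ` S) = card T" using card_image[OF inj] T(3) by simp
  ultimately have "\<sigma> ` S = T" using card_subset_eq[OF T(2)] by blast
  then have "bij_betw \<sigma> S T" using inj by (simp add: bij_betw_def)
  then have "subfield_iso S T \<sigma>"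
    unfolding subfield_iso_def using S(1) T(1) map_1 map_add map_mult by blast
  then show ?thesis by (rule that)
qed

theorem finite_subfield_iso:
  fixes S :: "'a::field set" and T :: "'b::field set"
  assumes S: "subfield S" "card S = q" and T: "subfield T" "card T = q"
    and q: "prime p" "q = p ^ k" "0 < k"
  obtains \<sigma> where "subfield_iso S T \<sigma>"
proof -
  have "p ^ 1 \<le> p ^ k" using q prime_ge_2_nat[OF q(1)] by (intro power_increasing) auto
  then have q2: "2 \<le> q" using prime_ge_2_nat[OF q(1)] q(2) by simp
  then have fin: "finite S" "finite T" using S(2) T(2) card.infinite by fastforce+
  have "(of_nat p :: 'a) ^ k = 0" "(of_nat p :: 'b) ^ k = 0"
    using of_nat_card_finite_subfield[OF S(1) fin(1)] of_nat_card_finite_subfield[OF T(1) fin(2)] S(2) T(2) q(2)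
    by (simp_all add: of_nat_power)
  then have char: "(of_nat p :: 'a) = 0" "(of_nat p :: 'b) = 0" by simp_all
  obtain \<alpha> where \<alpha>: "\<alpha> \<in> S" "\<And>s. s \<in> S \<Longrightarrow> s \<noteq> 0 \<Longrightarrow> \<exists>k::nat. s = \<alpha> ^ k"
    using finite_subfield_cyclic[OF S(1) fin(1)] by blast
  have \<alpha>q: "\<alpha> ^ q = \<alpha>" using power_card_finite_subfield[OF S(1) fin(1) \<alpha>(1)] S(2) by simp
  define P where "P d \<longleftrightarrow> (\<exists>m. lead_coeff m = 1 \<and> degree m = d \<and> ipoly m \<alpha> = 0)" for d
  have "P q" unfolding P_def using \<alpha>q degree_X_power_minus_X[OF q2]
    by (intro exI[of _ "monom 1 q - monom 1 1"]) (auto simp: ipoly_diff ipoly_monom)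
  then have "P (LEAST d. P d)" by (rule LeastI)
  then obtain m where m: "lead_coeff m = 1" "degree m = (LEAST d. P d)" "ipoly m \<alpha> = 0"
    unfolding P_def by blast
  have min: "degree m \<le> degree m'" if "lead_coeff m' = 1" "ipoly m' \<alpha> = 0" for m'
    using Least_le[of P "degree m'"] that m(2) by (auto simp: P_def)
  have "t ^ q = t" if "t \<in> T" for t
    using power_card_finite_subfield[OF T(1) fin(2) that] T(2) by simp
  then obtain \<beta> where \<beta>: "\<beta> \<in> T" "ipoly m \<beta> = 0"
    using min_poly_has_root_in_subfield[OF q(1) char q2 \<alpha>q fin(2) T(2) _ m(1,3) min] by blast
  have "card T = card S" using S(2) T(2) by simp
  from subfield_iso_of_ipoly_kernel[OF S(1) fin(1) \<alpha> T(1) fin(2) this \<beta>(1)]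
  show ?thesis using ipoly_root_transfer[OF q(1) char m(1,3) \<beta>(2) min] that by blast
qed

section \<open>Linear algebra of coordinate vectors\<close>

lemma vspan_iff: "w \<in> vspan W \<longleftrightarrow> (\<exists>c. \<forall>j. w j = (\<Sum>u\<in>W. c u * u j))"
  by (simp add: vspan_def)

lemma vspan_zero: "(\<lambda>j. 0) \<in> vspan W"
  unfolding vspan_iff by (intro exI[of _ "\<lambda>_. 0"]) simp

lemma vspan_lin_comb: "x \<in> vspan W \<Longrightarrow> y \<in> vspan W \<Longrightarrow> (\<lambda>j. a * x j + b * y j) \<in> vspan W"
proof -
  assume "x \<in> vspan W" "y \<in> vspan W"
  then obtain c d where c: "\<forall>j. x j = (\<Sum>u\<in>W. c u * u j)" and d: "\<forall>j. y j = (\<Sum>u\<in>W. d u * u j)"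
    unfolding vspan_iff by blast
  show ?thesis unfolding vspan_iff
    by (intro exI[of _ "\<lambda>u. a * c u + b * d u"])
      (simp add: c d sum_distrib_left sum.distrib algebra_simps)
qed

lemma vspan_scale: "x \<in> vspan W \<Longrightarrow> (\<lambda>j. a * x j) \<in> vspan W"
  using vspan_lin_comb[of x W x a 0] by simp

lemma sum_delta_mult:
  fixes f :: "'i \<Rightarrow> 'a::semiring_1"
  assumes "finite I" "i0 \<in> I"
  shows "(\<Sum>i\<in>I. (if i = i0 then 1 else 0) * f i) = f i0"
proof -
  have "(\<Sum>i\<in>I. (if i = i0 then 1 else 0) * f i) = (\<Sum>i\<in>I. if i = i0 then f i else 0)"
    by (intro sum.cong) auto
  then show ?thesis using assms by simp
qed

lemma vspan_base: "finite W \<Longrightarrow> w \<in> W \<Longrightarrow> w \<in> vspan W"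
  unfolding vspan_iff by (intro exI[of _ "\<lambda>u. if u = w then 1 else 0"]) (simp add: sum_delta_mult)

lemma vspan_empty: "w \<in> vspan {} \<longleftrightarrow> w = (\<lambda>j. 0)"
  by (auto simp: vspan_iff)

lemma vspan_insert:
  assumes "finite W"
  shows "w \<in> vspan (insert x W) \<longleftrightarrow> (\<exists>a. (\<lambda>j. w j - a * x j) \<in> vspan W)"
proof (cases "x \<in> W")
  case True
  have "w \<in> vspan W" if "(\<lambda>j. w j - a * x j) \<in> vspan W" for a
    using vspan_lin_comb[OF that vspan_base[OF assms True], of 1 a] by simp
  then show ?thesis using True by (auto simp: insert_absorb intro: exI[of _ 0])
next
  case False
  show ?thesis
  proof
    assume "w \<in> vspan (insert x W)"
    then obtain c where "\<forall>j. w j = (\<Sum>u\<in>insert x W. c u * u j)" unfolding vspan_iff by blast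
    then have "\<forall>j. w j - c x * x j = (\<Sum>u\<in>W. c u * u j)" using False assms by simp
    then show "\<exists>a. (\<lambda>j. w j - a * x j) \<in> vspan W" unfolding vspan_iff by blast
  next
    assume "\<exists>a. (\<lambda>j. w j - a * x j) \<in> vspan W"
    then obtain a c where c: "\<forall>j. w j - a * x j = (\<Sum>u\<in>W. c u * u j)" unfolding vspan_iff by blast
    have "(\<Sum>u\<in>W. (c(x := a)) u * u j) = (\<Sum>u\<in>W. c u * u j)" for j
      using False by (intro sum.cong) auto
    then have "\<forall>j. w j = (\<Sum>u\<in>insert x W. (c(x := a)) u * u j)"
      using c False assms by (simp add: algebra_simps)
    then show "w \<in> vspan (insert x W)" unfolding vspan_iff by blast
  qed
qed

lemma vspan_pair: "w \<in> vspan {x, y} \<longleftrightarrow> (\<exists>a b. \<forall>j. w j = a * x j + b * y j)"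
proof -
  have "w \<in> vspan {x, y} \<longleftrightarrow> (\<exists>a b. (\<lambda>j. w j - a * x j - b * y j) = (\<lambda>j. 0))"
    by (simp add: vspan_insert vspan_empty)
  also have "\<dots> \<longleftrightarrow> (\<exists>a b. \<forall>j. w j = a * x j + b * y j)"
    by (simp add: fun_eq_iff algebra_simps)
  finally show ?thesis .
qed

lemma vspan_sum:
  assumes "finite I" "\<And>i. i \<in> I \<Longrightarrow> u i \<in> vspan W"
  shows "(\<lambda>j. \<Sum>i\<in>I. c i * u i j) \<in> vspan W"
  using assms
proof (induct I rule: finite_induct)
  case (insert i I)
  then have "(\<lambda>j. 1 * (c i * u i j) + 1 * (\<Sum>i\<in>I. c i * u i j)) \<in> vspan W"
    by (intro vspan_lin_comb vspan_scale) auto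
  then show ?case using insert by simp
qed (simp add: vspan_zero)

lemma vspan_subset:
  assumes "finite W" "W \<subseteq> vspan W'"
  shows "vspan W \<subseteq> vspan W'"
proof
  fix w assume "w \<in> vspan W"
  then obtain c where c: "\<forall>j. w j = (\<Sum>u\<in>W. c u * u j)" unfolding vspan_iff by blast
  have "(\<lambda>j. \<Sum>u\<in>W. c u * u j) \<in> vspan W'" using assms by (intro vspan_sum) auto
  moreover have "w = (\<lambda>j. \<Sum>u\<in>W. c u * u j)" using c by auto
  ultimately show "w \<in> vspan W'" by simp
qed

lemma vspan_image_iff:
  assumes "inj_on A Y"
  shows "w \<in> vspan (A ` Y) \<longleftrightarrow> (\<exists>c. \<forall>j. w j = (\<Sum>y\<in>Y. c y * A y j))"
proof
  assume "w \<in> vspan (A ` Y)"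
  then obtain c where c: "\<forall>j. w j = (\<Sum>u\<in>A ` Y. c u * u j)" unfolding vspan_iff by blast
  have "\<forall>j. w j = (\<Sum>y\<in>Y. c (A y) * A y j)"
    using c sum.reindex[OF assms, of "\<lambda>u. c u * u _"] by simp
  then show "\<exists>c. \<forall>j. w j = (\<Sum>y\<in>Y. c y * A y j)" by (rule exI[of _ "\<lambda>y. c (A y)"])
next
  assume "\<exists>c. \<forall>j. w j = (\<Sum>y\<in>Y. c y * A y j)"
  then obtain c where c: "\<forall>j. w j = (\<Sum>y\<in>Y. c y * A y j)" by blast
  have "\<forall>j. w j = (\<Sum>u\<in>A ` Y. c (inv_into Y A u) * u j)"
    using c sum.reindex[OF assms, of "\<lambda>u. c (inv_into Y A u) * u _"] assms by simp
  then show "w \<in> vspan (A ` Y)" unfolding vspan_iff by (rule exI[of _ "\<lambda>u. c (inv_into Y A u)"])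
qed

lemma not_lin_indep_fam_iff:
  "\<not> lin_indep_fam u X \<longleftrightarrow> (finite X \<longrightarrow> (\<exists>c. (\<forall>j. (\<Sum>i\<in>X. c i * u i j) = 0) \<and> (\<exists>i\<in>X. c i \<noteq> 0)))"
  unfolding lin_indep_fam_def by blast

lemma lin_indep_fam_subset:
  assumes "lin_indep_fam u X" "X' \<subseteq> X"
  shows "lin_indep_fam u X'"
  unfolding lin_indep_fam_def
proof (intro conjI allI impI ballI)
  have fin: "finite X" using assms(1) by (simp add: lin_indep_fam_def)
  then show "finite X'" using assms(2) finite_subset by blast
  fix c i assume c: "\<forall>j. (\<Sum>i\<in>X'. c i * u i j) = 0" and i: "i \<in> X'"
  define c' where "c' i = (if i \<in> X' then c i else 0)" for i
  have "(\<Sum>i\<in>X. c' i * u i j) = (\<Sum>i\<in>X'. c i * u i j)" for j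
    using assms(2) fin by (intro sum.mono_neutral_cong_right) (auto simp: c'_def)
  then have "\<forall>i\<in>X. c' i = 0" using assms(1) c unfolding lin_indep_fam_def by simp
  then have "c' i = 0" using i assms(2) by blast
  then show "c i = 0" using i by (simp add: c'_def)
qed

lemma lin_indep_fam_cong:
  assumes "\<And>i. i \<in> X \<Longrightarrow> u i = u' i"
  shows "lin_indep_fam u X \<longleftrightarrow> lin_indep_fam u' X"
proof -
  have "(\<Sum>i\<in>X. c i * u i j) = (\<Sum>i\<in>X. c i * u' i j)" for c j
    using assms by (intro sum.cong) auto
  then show ?thesis unfolding lin_indep_fam_def by simp
qed

lemma sum_mult_diff_scaled:
  fixes c :: "'i \<Rightarrow> 'a::comm_ring"
  shows "(\<Sum>i\<in>I. c i * (u i j - a i * w j)) = (\<Sum>i\<in>I. c i * u i j) - (\<Sum>i\<in>I. c i * a i) * w j"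
proof -
  have "(\<Sum>i\<in>I. c i * (u i j - a i * w j)) = (\<Sum>i\<in>I. c i * u i j - c i * a i * w j)"
    by (intro sum.cong) (simp_all add: algebra_simps)
  then show ?thesis by (simp add: sum_subtractf sum_distrib_right)
qed

lemma relation_lift_elimination:
  fixes c :: "'i \<Rightarrow> 'a::field"
  assumes "finite I" "i0 \<in> I"
    and rel: "\<And>j. (\<Sum>i\<in>I - {i0}. c i * (u i j - a i * u i0 j)) = 0"
  shows "(\<Sum>i\<in>I. (c(i0 := - (\<Sum>i\<in>I - {i0}. c i * a i))) i * u i j) = 0"
proof -
  let ?d = "c(i0 := - (\<Sum>i\<in>I - {i0}. c i * a i))"
  note sum_mult_diff_scaled[where I = "I - {i0}" and w = "u i0"]
  moreover have "(\<Sum>i\<in>I - {i0}. ?d i * u i j) = (\<Sum>i\<in>I - {i0}. c i * u i j)"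
    by (intro sum.cong) auto
  ultimately show ?thesis using rel[of j] assms(1,2) by (simp add: sum.remove)
qed

lemma lin_dependent_over_subfield:
  fixes u :: "'i \<Rightarrow> nat \<Rightarrow> 'a::field"
  assumes S: "subfield S" and I: "finite I" "i0 \<in> I" and uS: "\<forall>i\<in>I. \<forall>j. u i j \<in> S"
    and rel: "\<forall>j. (\<Sum>i\<in>I. c i * u i j) = 0" and c0: "c i0 \<noteq> 0"
  shows "\<exists>d. (\<forall>i. d i \<in> S) \<and> (\<forall>j. (\<Sum>i\<in>I. d i * u i j) = 0) \<and> d i0 \<noteq> 0"
  using I uS rel c0
proof (induct "card I" arbitrary: I c u rule: less_induct)
  case less
  note cS = subfield_closed[OF S]
  show ?case
  proof (cases "\<forall>i\<in>I - {i0}. \<forall>j. u i j = 0")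
    case True
    define d where "d i = (if i = i0 then (1::'a) else 0)" for i
    have "(\<Sum>i\<in>I. c i * u i j) = c i0 * u i0 j" "(\<Sum>i\<in>I. d i * u i j) = u i0 j" for j
      using less True by (simp_all add: sum.remove d_def)
    then show ?thesis using less cS by (intro exI[of _ d]) (auto simp: d_def)
  next
    case False
    then obtain i1 k where i1: "i1 \<in> I" "i1 \<noteq> i0" and k: "u i1 k \<noteq> 0" by blast
    define a where "a i = u i k / u i1 k" for i
    define u' where "u' i j = u i j - a i * u i1 j" for i j
    let ?I' = "I - {i1}"
    have u'k: "u' i k = 0" for i using k by (simp add: u'_def a_def)
    have lift: "(\<Sum>i\<in>I. (e(i1 := - (\<Sum>i\<in>?I'. e i * a i))) i * u i j) = 0"
      if "\<forall>j. (\<Sum>i\<in>?I'. e i * u' i j) = 0" for e j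
      by (rule relation_lift_elimination) (use that less(2) i1(1) in \<open>simp_all add: u'_def\<close>)
    have eq: "(\<Sum>i\<in>?I'. c i * u' i j) = - (c i1 + (\<Sum>i\<in>?I'. c i * a i)) * u i1 j" for j
    proof -
      have "c i1 * u i1 j + (\<Sum>i\<in>?I'. c i * u i j) = 0"
        using less(5) less(2) i1(1) by (simp add: sum.remove)
      then have "(\<Sum>i\<in>?I'. c i * u i j) = - c i1 * u i1 j"
        by (simp add: eq_neg_iff_add_eq_0 add.commute)
      then show ?thesis unfolding u'_def sum_mult_diff_scaled by (simp add: algebra_simps)
    qed
    have "(\<Sum>i\<in>?I'. c i * u' i k) = 0" by (simp add: u'k)
    then have "- (c i1 + (\<Sum>i\<in>?I'. c i * a i)) * u i1 k = 0" unfolding eq .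
    then have "c i1 + (\<Sum>i\<in>?I'. c i * a i) = 0" using k by (metis mult_eq_0_iff neg_equal_0_iff_equal)
    then have rel': "\<forall>j. (\<Sum>i\<in>?I'. c i * u' i j) = 0" using eq by simp
    have u'S: "\<forall>i\<in>?I'. \<forall>j. u' i j \<in> S" using less i1 by (auto simp: u'_def a_def intro!: cS)
    have card: "card ?I' < card I" using less(2) i1(1) by (rule card_Diff1_less)
    have I': "finite ?I'" "i0 \<in> ?I'" using less(2,3) i1(2) by auto
    obtain d' where d': "\<forall>i. d' i \<in> S" "\<forall>j. (\<Sum>i\<in>?I'. d' i * u' i j) = 0" "d' i0 \<noteq> 0"
      using less(1)[OF card I' u'S rel' less(6)] by blast
    define d where "d = d'(i1 := - (\<Sum>i\<in>?I'. d' i * a i))"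
    have "(\<Sum>i\<in>?I'. d' i * a i) \<in> S"
      using d'(1) less i1 by (intro subfield_sum[OF S]) (auto simp: a_def intro!: cS)
    then have "\<forall>i. d i \<in> S" using d'(1) cS by (simp add: d_def)
    then show ?thesis using lift[OF d'(2)] d'(3) i1(2) by (intro exI[of _ d]) (auto simp: d_def)
  qed
qed

lemma vspan_over_subfield:
  fixes u :: "'i \<Rightarrow> nat \<Rightarrow> 'a::field" and x :: "nat \<Rightarrow> 'a"
  assumes S: "subfield S" and I: "finite I" and uS: "\<forall>i\<in>I. \<forall>j. u i j \<in> S" and xS: "\<forall>j. x j \<in> S"
    and comb: "\<forall>j. x j = (\<Sum>i\<in>I. c i * u i j)"
  shows "\<exists>d. (\<forall>i. d i \<in> S) \<and> (\<forall>j. x j = (\<Sum>i\<in>I. d i * u i j))"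
proof -
  define U where "U k = (case k of None \<Rightarrow> x | Some i \<Rightarrow> u i)" for k
  define C where "C k = (case k of None \<Rightarrow> 1 | Some i \<Rightarrow> - c i)" for k
  define J where "J = insert None (Some ` I)"
  have sJ: "(\<Sum>k\<in>J. f k) = f None + (\<Sum>i\<in>I. f (Some i))" for f :: "_ \<Rightarrow> 'a"
    using I by (simp add: J_def sum.reindex)
  have "\<forall>j. (\<Sum>k\<in>J. C k * U k j) = 0"
    using comb by (simp add: sJ C_def U_def sum_negf)
  moreover have "\<forall>k\<in>J. \<forall>j. U k j \<in> S" using uS xS by (auto simp: J_def U_def)
  moreover have "finite J" "None \<in> J" "C None \<noteq> 0" using I by (auto simp: J_def C_def)
  ultimately obtain D where D: "\<forall>k. D k \<in> S" "\<forall>j. (\<Sum>k\<in>J. D k * U k j) = 0" "D None \<noteq> 0"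
    using lin_dependent_over_subfield[OF S, of J None U C] by blast
  have "x j = (\<Sum>i\<in>I. (- D (Some i) / D None) * u i j)" for j
  proof -
    have "D None * x j + (\<Sum>i\<in>I. D (Some i) * u i j) = 0"
      using D(2) by (simp add: sJ U_def)
    then have "x j = - (\<Sum>i\<in>I. D (Some i) * u i j) / D None"
      using D(3) by (simp add: field_simps eq_neg_iff_add_eq_0)
    also have "\<dots> = (\<Sum>i\<in>I. (- D (Some i) / D None) * u i j)"
      by (simp add: sum_divide_distrib sum_negf[symmetric])
    finally show ?thesis .
  qed
  then show ?thesis using D(1) subfield_closed[OF S] by (intro exI[of _ "\<lambda>i. - D (Some i) / D None"]) auto
qed

lemma lin_indep_fam_span_bound:
  assumes "finite W" "lin_indep_fam u I" "\<forall>i\<in>I. u i \<in> vspan W"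
  shows "card I \<le> card W"
  using assms
proof (induct W arbitrary: I u rule: finite_induct)
  case empty
  have "I = {}"
  proof (rule ccontr)
    assume "I \<noteq> {}"
    then obtain i0 where i0: "i0 \<in> I" by blast
    have "\<forall>j. (\<Sum>i\<in>I. (if i = i0 then 1 else 0) * u i j) = 0"
      using empty i0 finite_subset by (simp add: sum_delta_mult[of I i0] vspan_empty lin_indep_fam_def)
    then show False using empty(1) i0 unfolding lin_indep_fam_def by fastforce
  qed
  then show ?case by simp
next
  case (insert w W)
  have finI: "finite I" using insert(4) by (simp add: lin_indep_fam_def)
  have "\<forall>i\<in>I. \<exists>a. (\<lambda>j. u i j - a * w j) \<in> vspan W"
    using insert vspan_insert[OF insert(1)] by blast
  then obtain a where a: "\<And>i. i \<in> I \<Longrightarrow> (\<lambda>j. u i j - a i * w j) \<in> vspan W" by metis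
  show ?case
  proof (cases "\<forall>i\<in>I. a i = 0")
    case True
    then have "card I \<le> card W" using a insert(3,4) by fastforce
    then show ?thesis using insert by simp
  next
    case False
    then obtain i0 where i0: "i0 \<in> I" "a i0 \<noteq> 0" by blast
    define u' where "u' i j = u i j - (a i / a i0) * u i0 j" for i j
    have "u' i \<in> vspan W" if "i \<in> I - {i0}" for i
    proof -
      have "(\<lambda>j. 1 * (u i j - a i * w j) + (- (a i / a i0)) * (u i0 j - a i0 * w j)) \<in> vspan W"
        using a that i0(1) by (intro vspan_lin_comb) auto
      moreover have "(\<lambda>j. 1 * (u i j - a i * w j) + (- (a i / a i0)) * (u i0 j - a i0 * w j)) = u' i"
        using i0(2) by (auto simp: u'_def fun_eq_iff field_simps)
      ultimately show ?thesis by simp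
    qed
    moreover have "lin_indep_fam u' (I - {i0})"
      unfolding lin_indep_fam_def
    proof (intro conjI allI impI ballI)
      fix c i assume c: "\<forall>j. (\<Sum>i\<in>I - {i0}. c i * u' i j) = 0" and i: "i \<in> I - {i0}"
      define d where "d = c(i0 := - (\<Sum>i\<in>I - {i0}. c i * (a i / a i0)))"
      have "\<forall>j. (\<Sum>i\<in>I. d i * u i j) = 0" unfolding d_def
        by (intro allI relation_lift_elimination[OF finI i0(1)]) (use c in \<open>simp add: u'_def\<close>)
      then have "d i = 0" using insert(4) i unfolding lin_indep_fam_def by blast
      then show "c i = 0" using i by (simp add: d_def)
    qed (use finI in simp)
    ultimately have "card (I - {i0}) \<le> card W" using insert(3) by blast
    then show ?thesis
      using insert(1,2) finI i0(1) card_Diff_singleton[OF i0(1)] card_gt_0_iff[of I] by fastforce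
  qed
qed

corollary lin_dependent_if_card_gt_span:
  "finite W \<Longrightarrow> finite I \<Longrightarrow> card W < card I \<Longrightarrow> \<forall>i\<in>I. u i \<in> vspan W \<Longrightarrow> \<not> lin_indep_fam u I"
  using lin_indep_fam_span_bound by fastforce

context subfield_iso
begin

lemma not_lin_indep_fam_map:
  fixes u :: "'i \<Rightarrow> nat \<Rightarrow> 'a"
  assumes I: "finite I" and uS: "\<forall>i\<in>I. \<forall>j. u i j \<in> S" and dep: "\<not> lin_indep_fam u I"
  shows "\<not> lin_indep_fam (\<lambda>i j. \<sigma> (u i j)) I"
proof -
  obtain c i0 where c: "\<forall>j. (\<Sum>i\<in>I. c i * u i j) = 0" "i0 \<in> I" "c i0 \<noteq> 0"
    using dep I unfolding not_lin_indep_fam_iff by blast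
  obtain d where d: "\<forall>i. d i \<in> S" "\<forall>j. (\<Sum>i\<in>I. d i * u i j) = 0" "d i0 \<noteq> 0"
    using lin_dependent_over_subfield[OF subfield_S I c(2) uS c(1) c(3)] by blast
  have "(\<Sum>i\<in>I. \<sigma> (d i) * \<sigma> (u i j)) = \<sigma> (\<Sum>i\<in>I. d i * u i j)" for j
    using d(1) uS subfield_closed[OF subfield_S] by (simp add: map_sum map_mult)
  then have "\<forall>j. (\<Sum>i\<in>I. \<sigma> (d i) * \<sigma> (u i j)) = 0" using d(2) map_0 by simp
  moreover have "\<sigma> (d i0) \<noteq> 0" using map_eq_0_iff d by auto
  ultimately show ?thesis using c(2) unfolding not_lin_indep_fam_iff
    by (intro impI exI[of _ "\<lambda>i. \<sigma> (d i)"] conjI) auto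
qed

lemma map_vspan_image:
  fixes A :: "'e \<Rightarrow> nat \<Rightarrow> 'a"
  assumes Y: "finite Y" "inj_on A Y" "inj_on (\<lambda>e j. \<sigma> (A e j)) Y"
    and AS: "\<forall>y\<in>Y. \<forall>j. A y j \<in> S" "\<forall>j. A e j \<in> S"
    and sp: "A e \<in> vspan (A ` Y)"
  shows "(\<lambda>j. \<sigma> (A e j)) \<in> vspan ((\<lambda>e j. \<sigma> (A e j)) ` Y)"
proof -
  obtain c where "\<forall>j. A e j = (\<Sum>y\<in>Y. c y * A y j)" using sp vspan_image_iff[OF Y(2)] by blast
  then obtain d where d: "\<forall>y. d y \<in> S" "\<forall>j. A e j = (\<Sum>y\<in>Y. d y * A y j)"
    using vspan_over_subfield[OF subfield_S Y(1) AS] by blast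
  have "\<forall>j. \<sigma> (A e j) = (\<Sum>y\<in>Y. \<sigma> (d y) * \<sigma> (A y j))"
    using d AS subfield_closed[OF subfield_S] by (simp add: map_sum map_mult)
  then show ?thesis unfolding vspan_image_iff[OF Y(3)] by (rule exI[of _ "\<lambda>y. \<sigma> (d y)"])
qed

end

section \<open>Representations of \<open>PG(n - 1, q)\<close> and of its extension\<close>

lemma sum_Inl_Inr:
  assumes "finite Y" "finite Z"
  shows "(\<Sum>i\<in>Inl ` Y \<union> Inr ` Z. g i) = (\<Sum>y\<in>Y. g (Inl y)) + (\<Sum>z\<in>Z. g (Inr z))"
proof -
  have "(\<Sum>i\<in>Inl ` Y \<union> Inr ` Z. g i) = (\<Sum>i\<in>Inl ` Y. g i) + (\<Sum>i\<in>Inr ` Z. g i)"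
    using assms by (intro sum.union_disjoint) auto
  also have "\<dots> = (\<Sum>y\<in>Y. g (Inl y)) + (\<Sum>z\<in>Z. g (Inr z))"
    by (simp add: sum.reindex)
  finally show ?thesis .
qed

lemma sum_pgbar_cols:
  assumes "finite Y" "finite Z"
  shows "(\<Sum>x\<in>Inl ` Y \<union> Inr ` Z. c x * pgbar_cols A w x j) =
         (\<Sum>y\<in>Y. c (Inl y) * A y j) + (\<Sum>L\<in>Z. c (Inr L) * w L j)"
  using sum_Inl_Inr[OF assms, of "\<lambda>x. c x * pgbar_cols A w x j"] by (simp add: pgbar_cols_def)

lemma lin_indep_fam_pgbar_cols_Inl:
  fixes A :: "'e \<Rightarrow> nat \<Rightarrow> 'a::field"
  assumes "lin_indep_fam (pgbar_cols A w) (Inl ` Y)"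
  shows "lin_indep_fam A Y"
proof -
  have "finite (Inl ` Y :: ('e + 'e set) set)" using assms unfolding lin_indep_fam_def by blast
  then have fY: "finite Y" using finite_imageD inj_Inl by (metis inj_on_subset subset_UNIV)
  show ?thesis unfolding lin_indep_fam_def
  proof (intro conjI allI impI fY)
    fix c assume c: "\<forall>j. (\<Sum>i\<in>Y. c i * A i j) = 0"
    define c' where "c' = (case_sum c (\<lambda>_. 0) :: 'e + 'e set \<Rightarrow> 'a)"
    have "\<forall>j. (\<Sum>x\<in>Inl ` Y. c' x * pgbar_cols A w x j) = 0"
      using c by (simp add: sum.reindex c'_def pgbar_cols_def)
    then have "\<forall>x\<in>Inl ` Y. c' x = 0" using assms unfolding lin_indep_fam_def by blast
    then show "\<forall>i\<in>Y. c i = 0" by (simp add: c'_def)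
  qed
qed

lemma subset_pgbar_groundE:
  assumes "X \<subseteq> pgbar_ground E Ls"
  obtains Y Z where "Y \<subseteq> E" "Z \<subseteq> Ls" "X = Inl ` Y \<union> Inr ` Z"
proof
  show "{e. Inl e \<in> X} \<subseteq> E" "{L. Inr L \<in> X} \<subseteq> Ls" using assms by (auto simp: pgbar_ground_def)
  show "X = Inl ` {e. Inl e \<in> X} \<union> Inr ` {L. Inr L \<in> X}"
  proof
    show "X \<subseteq> Inl ` {e. Inl e \<in> X} \<union> Inr ` {L. Inr L \<in> X}"
    proof
      fix x assume "x \<in> X"
      then show "x \<in> Inl ` {e. Inl e \<in> X} \<union> Inr ` {L. Inr L \<in> X}" by (cases x) auto
    qed
  qed auto
qed

lemma card_image_Inl_Inr:
  fixes Y :: "'y set" and Z :: "'z set"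
  assumes "finite Y" "finite Z"
  shows "card (Inl ` Y \<union> Inr ` Z :: ('y + 'z) set) = card Y + card Z"
proof -
  have d: "(Inl ` Y :: ('y + 'z) set) \<inter> Inr ` Z = {}" by blast
  have "card (Inl ` Y \<union> Inr ` Z :: ('y + 'z) set) = card (Inl ` Y :: ('y + 'z) set) + card (Inr ` Z :: ('y + 'z) set)"
    using assms d by (intro card_Un_disjoint) auto
  then show ?thesis by (simp add: card_image)
qed

locale PG_rep =
  fixes S :: "'a::field set" and n :: nat and A :: "'e \<Rightarrow> nat \<Rightarrow> 'a" and E :: "'e set"
  assumes S: "subfield S" and finE: "finite E" and PG: "is_PG_rep S n A E"
begin

lemma col_in_S: "e \<in> E \<Longrightarrow> A e j \<in> S"
  using PG by (simp add: is_PG_rep_def)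
lemma col_zero_beyond: "e \<in> E \<Longrightarrow> n \<le> j \<Longrightarrow> A e j = 0"
  using PG by (simp add: is_PG_rep_def)
lemma col_nonzero: "e \<in> E \<Longrightarrow> A e \<noteq> (\<lambda>j. 0)"
  using PG by (simp add: is_PG_rep_def)
lemma col_not_parallel: "e \<in> E \<Longrightarrow> e' \<in> E \<Longrightarrow> e \<noteq> e' \<Longrightarrow> \<not> parallel (A e) (A e')"
  using PG by (simp add: is_PG_rep_def)
lemma obtain_point:
  assumes "\<forall>j. w j \<in> S" "\<forall>j. n \<le> j \<longrightarrow> w j = 0" "w \<noteq> (\<lambda>j. 0)"
  obtains e \<kappa> where "e \<in> E" "\<kappa> \<noteq> 0" "\<forall>j. w j = \<kappa> * A e j"
proof -
  have "\<exists>e\<in>E. parallel w (A e)" using PG assms by (simp add: is_PG_rep_def)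
  then obtain e c where e: "e \<in> E" "w = (\<lambda>j. c * A e j)" unfolding parallel_def by blast
  then have "c \<noteq> 0" using assms(3) by auto
  then show ?thesis using that e by auto
qed

lemma inj_on_cols: "inj_on A E"
proof (rule inj_onI)
  fix e e' assume "e \<in> E" "e' \<in> E" "A e = A e'"
  then show "e = e'" using col_not_parallel[of e e'] unfolding parallel_def by (metis (no_types) mult_1 )
qed

lemma two_cols_indep:
  assumes "c \<in> E" "d \<in> E" "c \<noteq> d" "\<forall>j. x * A c j + y * A d j = 0"
  shows "x = 0 \<and> y = 0"
proof (cases "x = 0")
  case True
  then have "\<forall>j. y * A d j = 0" using assms by simp
  then show ?thesis using True col_nonzero[OF assms(2)] by (auto simp: fun_eq_iff)
next
  case False
  then have "A c = (\<lambda>j. (- y / x) * A d j)" using assms(4)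
    by (auto simp: fun_eq_iff field_simps eq_neg_iff_add_eq_0)
  then show ?thesis using col_not_parallel[OF assms(1-3)] unfolding parallel_def by blast
qed

lemma mcl_pair: "mcl A E {c, d} = {e\<in>E. \<exists>x y. \<forall>j. A e j = x * A c j + y * A d j}"
  by (simp add: mcl_def vspan_pair)

lemma mcl_subset: "mcl A E X \<subseteq> E" by (auto simp: mcl_def)

lemma vspan_line:
  assumes "c \<in> E" "d \<in> E"
  shows "vspan (A ` mcl A E {c, d}) = vspan {A c, A d}"
proof
  have fin: "finite (A ` mcl A E {c, d})" using finE mcl_subset finite_subset by blast
  show "vspan (A ` mcl A E {c, d}) \<subseteq> vspan {A c, A d}"
    by (rule vspan_subset[OF fin]) (auto simp: mcl_def)
  have "c \<in> mcl A E {c, d}" "d \<in> mcl A E {c, d}"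
    using assms by (auto simp: mcl_def intro: vspan_base)
  then show "vspan {A c, A d} \<subseteq> vspan (A ` mcl A E {c, d})"
    by (intro vspan_subset) (auto intro: vspan_base fin)
qed

lemma mem_line:
  assumes "c \<in> E" "d \<in> E"
  shows "c \<in> mcl A E {c, d}" "d \<in> mcl A E {c, d}"
  using assms by (auto simp: mcl_def intro: vspan_base)

lemma vspan_zero_beyond:
  assumes "finite W" "\<forall>w\<in>W. \<forall>j. n \<le> j \<longrightarrow> w j = 0" "x \<in> vspan W" "n \<le> j"
  shows "x j = 0"
  using assms unfolding vspan_iff by (auto intro!: sum.neutral)

lemma inj_on_cols_subset: "Y \<subseteq> E \<Longrightarrow> inj_on A Y"
  using inj_on_cols inj_on_subset by blast

lemma finite_ground_subset: "Y \<subseteq> E \<Longrightarrow> finite Y"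
  using finE finite_subset by blast

lemma vspan_cols_iff: "Y \<subseteq> E \<Longrightarrow> x \<in> vspan (A ` Y) \<longleftrightarrow> (\<exists>c. \<forall>j. x j = (\<Sum>y\<in>Y. c y * A y j))"
  using vspan_image_iff[OF inj_on_cols_subset] by blast

lemma vspan_cols_of_relation:
  assumes Y: "Y \<subseteq> E" and rel: "\<forall>j. (\<Sum>y\<in>Y. cy y * A y j) + c * w j = 0" and c: "c \<noteq> 0"
  shows "w \<in> vspan (A ` Y)"
proof -
  have "\<forall>j. w j = (\<Sum>y\<in>Y. (- cy y / c) * A y j)"
  proof
    fix j
    have "c * w j = - (\<Sum>y\<in>Y. cy y * A y j)" using rel by (simp add: eq_neg_iff_add_eq_0 add.commute)
    then show "w j = (\<Sum>y\<in>Y. (- cy y / c) * A y j)" using c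
      by (simp add: field_simps sum_divide_distrib[symmetric] sum_negf)
  qed
  then show ?thesis unfolding vspan_cols_iff[OF Y] by (rule exI[of _ "\<lambda>y. - cy y / c"])
qed

lemma vspan_cols_over_subfield:
  fixes B :: "'k \<Rightarrow> nat \<Rightarrow> 'a"
  assumes Y: "Y \<subseteq> E" and K: "finite K" "t \<in> K" "\<forall>s\<in>K. \<forall>j. B s j \<in> S" and xt: "xc t \<noteq> 0"
    and xY: "(\<lambda>j. \<Sum>s\<in>K. xc s * B s j) \<in> vspan (A ` Y)"
  shows "\<exists>D. (\<forall>s. D s \<in> S) \<and> D t \<noteq> 0 \<and> (\<lambda>j. \<Sum>s\<in>K. D s * B s j) \<in> vspan (A ` Y)"
proof -
  have fY: "finite Y" using finite_ground_subset[OF Y] .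
  obtain k where k: "\<forall>j. (\<Sum>s\<in>K. xc s * B s j) = (\<Sum>y\<in>Y. k y * A y j)"
    using xY vspan_cols_iff[OF Y] by auto
  define I where "I = Inl ` Y \<union> Inr ` K"
  define U where "U = case_sum A B"
  define C where "C = case_sum k (\<lambda>s. - xc s)"
  have sI: "(\<Sum>i\<in>I. g i) = (\<Sum>y\<in>Y. g (Inl y)) + (\<Sum>s\<in>K. g (Inr s))" for g :: "_ \<Rightarrow> 'a"
    unfolding I_def using sum_Inl_Inr[OF fY K(1)] by simp
  have rel: "\<forall>j. (\<Sum>i\<in>I. C i * U i j) = 0"
  proof
    fix j
    have "(\<Sum>i\<in>I. C i * U i j) = (\<Sum>y\<in>Y. k y * A y j) + (\<Sum>s\<in>K. (- xc s) * B s j)"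
      by (simp add: sI C_def U_def)
    also have "\<dots> = (\<Sum>y\<in>Y. k y * A y j) - (\<Sum>s\<in>K. xc s * B s j)"
      by (simp add: sum_negf)
    finally show "(\<Sum>i\<in>I. C i * U i j) = 0" using k by simp
  qed
  have UI: "\<forall>i\<in>I. \<forall>j. U i j \<in> S" using col_in_S Y K(3) by (auto simp: I_def U_def)
  have fI: "finite I" "Inr t \<in> I" "C (Inr t) \<noteq> 0" using fY K xt by (auto simp: I_def C_def)
  obtain D where D: "\<forall>i. D i \<in> S" "\<forall>j. (\<Sum>i\<in>I. D i * U i j) = 0" "D (Inr t) \<noteq> 0"
    using lin_dependent_over_subfield[OF S fI(1,2) UI rel fI(3)] by blast
  have "\<forall>j. (\<Sum>s\<in>K. D (Inr s) * B s j) = (\<Sum>y\<in>Y. (- D (Inl y)) * A y j)"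
  proof
    fix j
    have "(\<Sum>y\<in>Y. D (Inl y) * A y j) + (\<Sum>s\<in>K. D (Inr s) * B s j) = 0"
      using D(2) by (simp add: sI U_def)
    then show "(\<Sum>s\<in>K. D (Inr s) * B s j) = (\<Sum>y\<in>Y. (- D (Inl y)) * A y j)"
      by (simp add: sum_negf eq_neg_iff_add_eq_0 add.commute)
  qed
  then have "(\<lambda>j. \<Sum>s\<in>K. D (Inr s) * B s j) \<in> vspan (A ` Y)"
    unfolding vspan_cols_iff[OF Y] by (rule exI[of _ "\<lambda>y. - D (Inl y)"])
  then show ?thesis using D(1,3) by (intro exI[of _ "\<lambda>s. D (Inr s)"]) auto
qed

end

locale PG_bar_data = PG_rep +
  fixes L0 :: "'e set" and a b f :: 'e and v :: "nat \<Rightarrow> 'a::field"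
  assumes ab: "a \<in> E" "b \<in> E" "a \<noteq> b" and L0: "L0 = mcl A E {a, b}"
    and fE: "f \<in> E" and fL0: "f \<notin> L0"
    and vsp: "v \<in> vspan (A ` L0)" and vnp: "\<forall>e\<in>L0. \<not> parallel v (A e)"
begin

lemma ab_in_L0: "a \<in> L0" "b \<in> L0" using mem_line[OF ab(1,2)] L0 by auto

lemma v_coords: "\<exists>\<gamma> \<delta>. \<forall>j. v j = \<gamma> * A a j + \<delta> * A b j"
proof -
  have "v \<in> vspan {A a, A b}" using vsp vspan_line[OF ab(1,2)] L0 by simp
  then show ?thesis by (simp add: vspan_pair)
qed

lemma v_nonzero: "v \<noteq> (\<lambda>j. 0)"
proof
  assume "v = (\<lambda>j. 0)"
  then have "parallel v (A a)" unfolding parallel_def by (intro exI[of _ 0]) simp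
  then show False using vnp ab_in_L0 by auto
qed

lemma three_cols_indep:
  assumes "\<forall>j. x * A a j + y * A b j + z * A f j = 0"
  shows "x = 0 \<and> y = 0 \<and> z = 0"
proof (cases "z = 0")
  case True
  then show ?thesis using two_cols_indep[OF ab, of x y] assms by simp
next
  case False
  have "\<forall>j. A f j = (- x / z) * A a j + (- y / z) * A b j"
  proof
    fix j
    have "z * A f j = - x * A a j - y * A b j" using assms[rule_format, of j]
      by (simp add: algebra_simps eq_neg_iff_add_eq_0)
    then show "A f j = (- x / z) * A a j + (- y / z) * A b j" using False
      by (simp add: field_simps)
  qed
  then have "f \<in> L0" unfolding L0 mcl_pair using fE by blast
  then show ?thesis using fL0 by simp
qed

lemma coords_unique:
  assumes "\<forall>j. x1 * A a j + x2 * A b j + x3 * A f j = y1 * A a j + y2 * A b j + y3 * A f j"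
  shows "x1 = y1 \<and> x2 = y2 \<and> x3 = y3"
proof -
  have "\<forall>j. (x1 - y1) * A a j + (x2 - y2) * A b j + (x3 - y3) * A f j = 0"
    using assms by (simp add: algebra_simps)
  from three_cols_indep[OF this] show ?thesis by simp
qed

lemma coords_in_subfield:
  assumes "\<forall>j. w j \<in> S" "\<forall>j. w j = x1 * A a j + x2 * A b j + x3 * A f j"
  shows "x1 \<in> S \<and> x2 \<in> S \<and> x3 \<in> S"
proof -
  define u where "u i = (if i = (0::nat) then A a else if i = 1 then A b else A f)" for i
  have uS: "\<forall>i\<in>{0,1,2}. \<forall>j. u i j \<in> S" using col_in_S ab fE by (auto simp: u_def)
  define c where "c i = (if i = (0::nat) then x1 else if i = 1 then x2 else x3)" for i
  have wc: "\<forall>j. w j = (\<Sum>i\<in>{0,1,2}. c i * u i j)" using assms(2) by (simp add: c_def u_def)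
  have fin: "finite {0,1,2::nat}" by simp
  from vspan_over_subfield[OF S fin uS assms(1) wc]
  obtain d where d: "\<forall>i. d i \<in> S" "\<forall>j. w j = (\<Sum>i\<in>{0,1,2}. d i * u i j)" by blast
  have ex: "(\<Sum>i\<in>{0,1,2::nat}. d i * u i j) = d 0 * A a j + d 1 * A b j + d 2 * A f j" for j
    by (simp add: u_def)
  have "\<forall>j. x1 * A a j + x2 * A b j + x3 * A f j = d 0 * A a j + d 1 * A b j + d 2 * A f j"
    using d(2) assms(2) ex by metis
  then have "x1 = d 0 \<and> x2 = d 1 \<and> x3 = d 2" by (rule coords_unique)
  then show ?thesis using d(1) by simp
qed

lemma comb_in_subfield:
  assumes "s1 \<in> S" "s2 \<in> S" "s3 \<in> S"
  shows "\<forall>j. s1 * A a j + s2 * A b j + s3 * A f j \<in> S"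
    "\<forall>j. n \<le> j \<longrightarrow> s1 * A a j + s2 * A b j + s3 * A f j = 0"
  using assms col_in_S ab fE col_zero_beyond subfield_closed[OF S] by auto

lemma point_on_vf_line:
  assumes g: "g \<in> E" and gl: "A g \<in> vspan {v, A f}"
  shows "g = f"
proof -
  obtain \<alpha> \<beta> where ab': "\<forall>j. A g j = \<alpha> * v j + \<beta> * A f j" using gl vspan_pair by blast
  obtain \<gamma> \<delta> where gd: "\<forall>j. v j = \<gamma> * A a j + \<delta> * A b j" using v_coords by blast
  have co: "\<forall>j. A g j = (\<alpha> * \<gamma>) * A a j + (\<alpha> * \<delta>) * A b j + \<beta> * A f j"
    using ab' gd by (simp add: algebra_simps)
  have inS: "\<alpha> * \<gamma> \<in> S" "\<alpha> * \<delta> \<in> S" "\<beta> \<in> S" using coords_in_subfield[OF _ co] col_in_S[OF g] by auto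
  show ?thesis
  proof (cases "\<alpha> = 0")
    case True
    then have "parallel (A g) (A f)" using ab' unfolding parallel_def by auto
    then show ?thesis using col_not_parallel[OF g fE] by auto
  next
    case False
    define w where "w j = (\<alpha> * \<gamma>) * A a j + (\<alpha> * \<delta>) * A b j + 0 * A f j" for j
    have wv: "w = (\<lambda>j. \<alpha> * v j)" using gd by (auto simp: w_def fun_eq_iff algebra_simps)
    have "w \<noteq> (\<lambda>j. 0)" using wv False v_nonzero by (auto simp: fun_eq_iff)
    moreover have "\<forall>j. w j \<in> S" "\<forall>j. n \<le> j \<longrightarrow> w j = 0"
      unfolding w_def using comb_in_subfield[OF inS(1,2)] subfield_closed(1)[OF S] by blast+
    ultimately obtain e \<kappa> where e: "e \<in> E" "\<kappa> \<noteq> 0" "\<forall>j. w j = \<kappa> * A e j" using obtain_point by blast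
    have Ae: "\<forall>j. A e j = (\<alpha> * \<gamma> / \<kappa>) * A a j + (\<alpha> * \<delta> / \<kappa>) * A b j"
      using e wv unfolding w_def by (auto simp: field_simps)
    then have "e \<in> L0" unfolding L0 mcl_pair using e(1) by blast
    moreover have "parallel v (A e)" unfolding parallel_def
      using e(2,3) wv False by (intro exI[of _ "\<kappa> / \<alpha>"]) (auto simp: fun_eq_iff field_simps)
    ultimately show ?thesis using vnp by blast
  qed
qed

text \<open>An \<open>S\<close>-rational vector of the line \<open>\<langle>A c, A d\<rangle>\<close> is a point of \<open>N\<close>; if it is also on the line
  through \<open>v\<close> and \<open>A f\<close>, that point is \<open>f\<close>.\<close>

lemma f_in_line_if_parallel:
  assumes c: "c \<in> E" "d \<in> E" "c \<noteq> d" and dS: "dT \<in> S" "dF \<in> S" "dT \<noteq> 0"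
    and x: "x \<in> vspan {v, A f}" "\<rho> \<noteq> 0" "\<forall>j. x j = \<rho> * (dT * A c j + dF * A d j)"
  shows "f \<in> mcl A E {c, d}"
proof -
  define p where "p = (\<lambda>j. dT * A c j + dF * A d j)"
  have pS: "\<forall>j. p j \<in> S" using dS col_in_S c subfield_closed[OF S] by (auto simp: p_def)
  have pn: "\<forall>j. n \<le> j \<longrightarrow> p j = 0" using col_zero_beyond c by (simp add: p_def)
  have pnz: "p \<noteq> (\<lambda>j. 0)"
  proof
    assume "p = (\<lambda>j. 0)"
    then have "\<forall>j. dT * A c j + dF * A d j = 0" by (auto simp: p_def fun_eq_iff dest: fun_cong)
    then show False using two_cols_indep[OF c] dS(3) by blast
  qed
  obtain g \<kappa> where g: "g \<in> E" "\<kappa> \<noteq> 0" "\<forall>j. p j = \<kappa> * A g j" using obtain_point[OF pS pn pnz] by blast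
  have "x j = (\<rho> * \<kappa>) * A g j" for j using x(3) g(3) by (simp add: p_def)
  then have "A g = (\<lambda>j. (1 / (\<rho> * \<kappa>)) * x j)" using x(2) g(2) by (auto simp: fun_eq_iff)
  then have "A g \<in> vspan {v, A f}" using vspan_scale[OF x(1), of "1 / (\<rho> * \<kappa>)"] by simp
  then have "g = f" using point_on_vf_line g(1) by blast
  then have "\<forall>j. A f j = (dT / \<kappa>) * A c j + (dF / \<kappa>) * A d j"
    using g(2,3) by (auto simp: p_def field_simps)
  then show ?thesis unfolding mcl_pair using fE by blast
qed

lemma line_in_span:
  assumes c: "c \<in> E" "d \<in> E" "c \<noteq> d" and fcd: "f \<notin> mcl A E {c, d}"
    and Y: "Y \<subseteq> E"
    and x: "x \<in> vspan {v, A f}" "\<forall>j. x j = lam * A c j + mu * A d j" "lam \<noteq> 0"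
    and xY: "x \<in> vspan (A ` Y)"
  shows "A c \<in> vspan (A ` Y) \<and> A d \<in> vspan (A ` Y)"
proof -
  let ?B = "\<lambda>t. if t then A c else A d" and ?xc = "\<lambda>t. if t then lam else mu"
  have K: "finite {True, False}" "True \<in> {True, False}" "\<forall>t\<in>{True, False}. \<forall>j. ?B t j \<in> S"
    using col_in_S c by auto
  have "(\<lambda>j. \<Sum>t\<in>{True, False}. ?xc t * ?B t j) = x" using x(2) by auto
  then have "(\<lambda>j. \<Sum>t\<in>{True, False}. ?xc t * ?B t j) \<in> vspan (A ` Y)" using xY by simp
  moreover have "?xc True \<noteq> 0" using x(3) by simp
  ultimately obtain D where D: "\<forall>t. D t \<in> S" "D True \<noteq> 0" "(\<lambda>j. \<Sum>t\<in>{True, False}. D t * ?B t j) \<in> vspan (A ` Y)"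
    using vspan_cols_over_subfield[OF Y K, where xc = ?xc] by blast
  define dT where "dT = D True"
  define dF where "dF = D False"
  define p where "p = (\<lambda>j. dT * A c j + dF * A d j)"
  have pY: "p \<in> vspan (A ` Y)" using D(3) by (simp add: p_def dT_def dF_def)
  show ?thesis
  proof (cases "lam * dF - mu * dT = 0")
    case False
    define \<Delta> where "\<Delta> = lam * dF - mu * dT"
    have D0: "\<Delta> \<noteq> 0" using False by (simp add: \<Delta>_def)
    have Ac: "A c = (\<lambda>j. (dF / \<Delta>) * x j + (- mu / \<Delta>) * p j)"
    proof
      fix j
      have "dF * x j - mu * p j = \<Delta> * A c j"
        using x(2) by (simp add: p_def \<Delta>_def algebra_simps)
      then show "A c j = (dF / \<Delta>) * x j + (- mu / \<Delta>) * p j"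
        using D0 by (simp add: field_simps)
    qed
    have Ad: "A d = (\<lambda>j. (- dT / \<Delta>) * x j + (lam / \<Delta>) * p j)"
    proof
      fix j
      have "lam * p j - dT * x j = \<Delta> * A d j"
        using x(2) by (simp add: p_def \<Delta>_def algebra_simps)
      then show "A d j = (- dT / \<Delta>) * x j + (lam / \<Delta>) * p j"
        using D0 by (simp add: field_simps)
    qed
    have "A c \<in> vspan (A ` Y)" unfolding Ac by (rule vspan_lin_comb[OF xY pY])
    moreover have "A d \<in> vspan (A ` Y)"
    proof -
      have "(\<lambda>j. (- dT / \<Delta>) * x j + (lam / \<Delta>) * p j) \<in> vspan (A ` Y)" by (rule vspan_lin_comb[OF xY pY])
      then show ?thesis using Ad by simp
    qed
    ultimately show ?thesis by simp
  next
    case True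
    have dT0: "dT \<noteq> 0" using D(2) by (simp add: dT_def)
    have xp: "\<forall>j. x j = (lam / dT) * p j"
    proof
      fix j
      have "lam * dF = mu * dT" using True by simp
      then have "dT * x j = lam * p j" using x(2)
        by (simp add: p_def algebra_simps)
      then show "x j = (lam / dT) * p j" using dT0 by (simp add: field_simps)
    qed
    have "f \<in> mcl A E {c, d}"
      using f_in_line_if_parallel[OF c, where dT = dT and dF = dF and \<rho> = "lam / dT"] D(1) dT0 x(1,3) xp by (simp add: p_def dT_def dF_def)
    then show ?thesis using fcd by simp
  qed
qed

lemma lines_offE:
  assumes "L \<in> lines_off A E L0 f"
  obtains c d where "c \<in> E" "d \<in> E" "c \<noteq> d" "L = mcl A E {c, d}" "f \<notin> L" "L \<subseteq> E"
  using assms mcl_subset unfolding lines_off_def is_line_def by blast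

lemma finite_lines_off: "finite (lines_off A E L0 f)"
proof -
  have "L \<subseteq> E" if "L \<in> lines_off A E L0 f" for L
    using that mcl_subset by (auto simp: lines_off_def is_line_def)
  then have "lines_off A E L0 f \<subseteq> Pow E" by blast
  then show ?thesis using finE finite_subset by blast
qed

lemma mcl_pair_closed:
  assumes "c \<in> E" "d \<in> E" "e \<in> E" "A e \<in> vspan (A ` mcl A E {c, d})"
  shows "e \<in> mcl A E {c, d}"
  using assms vspan_line[OF assms(1,2)] by (simp add: mcl_def)

lemma line_subset_span:
  assumes L: "L \<in> lines_off A E L0 f" and x: "x \<noteq> (\<lambda>j. 0)" "x \<in> vspan (A ` L)" "x \<in> vspan {v, A f}"
    and Y: "Y \<subseteq> E" and xY: "x \<in> vspan (A ` Y)"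
  shows "A ` L \<subseteq> vspan (A ` Y)"
proof -
  obtain c d where cd: "c \<in> E" "d \<in> E" "c \<noteq> d" "L = mcl A E {c, d}" "f \<notin> L" "L \<subseteq> E"
    using lines_offE[OF L] by blast
  have fL: "f \<notin> mcl A E {c, d}" using cd by simp
  have "x \<in> vspan {A c, A d}" using x(2) vspan_line[OF cd(1,2)] cd(4) by simp
  then obtain lam mu where lm: "\<forall>j. x j = lam * A c j + mu * A d j" by (auto simp: vspan_pair)
  have both: "A c \<in> vspan (A ` Y) \<and> A d \<in> vspan (A ` Y)"
  proof (cases "lam = 0")
    case False
    show ?thesis by (rule line_in_span[OF cd(1-3) fL Y x(3) lm False xY])
  next
    case True
    have mu: "mu \<noteq> 0"
    proof
      assume "mu = 0"
      then have "x = (\<lambda>j. 0)" using lm True by auto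
      then show False using x(1) by simp
    qed
    have fL': "f \<notin> mcl A E {d, c}" using fL by (simp add: insert_commute)
    have lm': "\<forall>j. x j = mu * A d j + lam * A c j" using lm by (simp add: add.commute)
    from line_in_span[OF cd(2) cd(1) cd(3)[symmetric] fL' Y x(3) lm' mu xY] show ?thesis by simp
  qed
  then have "vspan {A c, A d} \<subseteq> vspan (A ` Y)" by (intro vspan_subset) auto
  moreover have "A ` L \<subseteq> vspan (A ` L)" using cd(6) finE finite_subset
    by (auto intro!: vspan_base)
  ultimately show ?thesis using vspan_line[OF cd(1,2)] cd(4) by auto
qed

lemma lines_off_eq_if_parallel:
  assumes L: "L \<in> lines_off A E L0 f" and x: "x \<noteq> (\<lambda>j. 0)" "x \<in> vspan (A ` L)" "x \<in> vspan {v, A f}"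
    and L': "L' \<in> lines_off A E L0 f" and x': "x' \<noteq> (\<lambda>j. 0)" "x' \<in> vspan (A ` L')" "x' \<in> vspan {v, A f}"
    and par: "parallel x x'"
  shows "L = L'"
proof -
  obtain \<kappa> where k: "x = (\<lambda>j. \<kappa> * x' j)" using par unfolding parallel_def by blast
  have k0: "\<kappa> \<noteq> 0" using k x(1) by auto
  obtain c d where cd: "c \<in> E" "d \<in> E" "c \<noteq> d" "L = mcl A E {c, d}" "f \<notin> L" "L \<subseteq> E"
    using lines_offE[OF L] by blast
  obtain c' d' where cd': "c' \<in> E" "d' \<in> E" "c' \<noteq> d'" "L' = mcl A E {c', d'}" "f \<notin> L'" "L' \<subseteq> E"
    using lines_offE[OF L'] by blast
  have "x \<in> vspan (A ` L')" using vspan_scale[OF x'(2), of \<kappa>] k by simp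
  then have "A ` L \<subseteq> vspan (A ` L')" using line_subset_span[OF L x(1-3) cd'(6)] by simp
  then have "L \<subseteq> L'" using cd cd' mcl_pair_closed[OF cd'(1,2)] by blast
  moreover
  have "x' = (\<lambda>j. (1 / \<kappa>) * x j)" using k k0 by auto
  then have "x' \<in> vspan (A ` L)" using vspan_scale[OF x(2), of "1 / \<kappa>"] by simp
  then have "A ` L' \<subseteq> vspan (A ` L)" using line_subset_span[OF L' x'(1-3) cd(6)] by simp
  then have "L' \<subseteq> L" using cd cd' mcl_pair_closed[OF cd(1,2)] by blast
  ultimately show ?thesis by simp
qed

definition plane_basis :: "nat \<Rightarrow> nat \<Rightarrow> 'a" where
  "plane_basis s = (if s = 0 then A a else if s = 1 then A b else A f)"

lemma sum_plane_basis: "(\<Sum>s\<in>{0,1,2}. c s * plane_basis s j) = c 0 * A a j + c 1 * A b j + c 2 * A f j"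
  by (simp add: plane_basis_def)

lemma plane_basis_indep:
  assumes "\<forall>j. (\<Sum>s\<in>{0,1,2}. c s * plane_basis s j) = 0" "s \<in> {0,1,2}"
  shows "c s = 0"
proof -
  have "\<forall>j. c 0 * A a j + c 1 * A b j + c 2 * A f j = 0" using assms(1) sum_plane_basis[of c] by simp
  then have "c 0 = 0 \<and> c 1 = 0 \<and> c 2 = 0" by (rule three_cols_indep)
  then show ?thesis using assms(2) by auto
qed

lemma plane_basis_in_plane: "s \<in> {0,1,2} \<Longrightarrow> plane_basis s \<in> vspan {A a, A b, A f}"
  by (auto simp: plane_basis_def intro: vspan_base)

lemma vspan_plane_basis: "K0 \<subseteq> {0,1,2} \<Longrightarrow> (\<lambda>j. \<Sum>s\<in>K0. c s * plane_basis s j) \<in> vspan {A a, A b, A f}"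
proof -
  assume K: "K0 \<subseteq> {0,1,2}"
  then have "finite K0" using finite_subset by blast
  moreover have "\<And>s. s \<in> K0 \<Longrightarrow> plane_basis s \<in> vspan {A a, A b, A f}" using K plane_basis_in_plane by blast
  ultimately show ?thesis by (rule vspan_sum)
qed

lemma plane_basis_in_S: "\<forall>j. plane_basis s j \<in> S" using col_in_S ab fE by (simp add: plane_basis_def)
lemma plane_basis_zero_beyond: "n \<le> j \<Longrightarrow> plane_basis s j = 0" using col_zero_beyond ab fE by (simp add: plane_basis_def)

lemma plane_vector_in_S:
  fixes D :: "nat \<Rightarrow> 'a"
  assumes "\<forall>s. D s \<in> S"
  shows "\<forall>j. (\<Sum>s\<in>{0,1,2}. D s * plane_basis s j) \<in> S" "\<forall>j. n \<le> j \<longrightarrow> (\<Sum>s\<in>{0,1,2}. D s * plane_basis s j) = 0"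
  using assms plane_basis_in_S plane_basis_zero_beyond subfield_closed[OF S] by (auto simp: sum_plane_basis)

lemma plane_point_in_span:
  assumes Y: "Y \<subseteq> E" and t: "t \<in> {0,1,2}" "xc t \<noteq> 0"
    and xY: "(\<lambda>j. \<Sum>s\<in>{0,1,2}. xc s * plane_basis s j) \<in> vspan (A ` Y)"
  obtains D g \<kappa> where "\<forall>s. D s \<in> S" "D t \<noteq> 0" "\<forall>s. xc s = 0 \<longrightarrow> D s = 0"
    "g \<in> E" "\<kappa> \<noteq> 0" "\<forall>j. (\<Sum>s\<in>{0,1,2}. D s * plane_basis s j) = \<kappa> * A g j"
    "A g \<in> vspan (A ` Y)" "A g \<in> vspan {A a, A b, A f}"
proof -
  define K where "K = {s \<in> {0,1,2::nat}. xc s \<noteq> 0}"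
  have sumK: "(\<Sum>s\<in>{0,1,2}. c s * plane_basis s j) = (\<Sum>s\<in>K. c s * plane_basis s j)"
    if "\<forall>s. xc s = 0 \<longrightarrow> c s = 0" for c j
    using that by (intro sum.mono_neutral_right) (auto simp: K_def)
  have K: "finite K" "t \<in> K" "\<forall>s\<in>K. \<forall>j. plane_basis s j \<in> S" using t plane_basis_in_S by (auto simp: K_def)
  have "(\<lambda>j. \<Sum>s\<in>K. xc s * plane_basis s j) \<in> vspan (A ` Y)" using xY sumK[of xc] by simp
  then obtain D0 where D0: "\<forall>s. D0 s \<in> S" "D0 t \<noteq> 0" "(\<lambda>j. \<Sum>s\<in>K. D0 s * plane_basis s j) \<in> vspan (A ` Y)"
    using vspan_cols_over_subfield[OF Y K _] t(2) by blast
  define D where "D s = (if xc s = 0 then 0 else D0 s)" for s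
  have D: "\<forall>s. D s \<in> S" "D t \<noteq> 0" "\<forall>s. xc s = 0 \<longrightarrow> D s = 0"
    using D0(1,2) t(2) subfield_closed(1)[OF S] by (auto simp: D_def)
  define p where "p = (\<lambda>j. \<Sum>s\<in>{0,1,2}. D s * plane_basis s j)"
  have "(\<Sum>s\<in>K. D s * plane_basis s j) = (\<Sum>s\<in>K. D0 s * plane_basis s j)" for j
    by (intro sum.cong) (auto simp: D_def K_def)
  then have pY: "p \<in> vspan (A ` Y)" using D0(3) sumK[of D] D(3) by (simp add: p_def)
  have "p \<noteq> (\<lambda>j. 0)"
  proof
    assume "p = (\<lambda>j. 0)"
    then have "\<forall>j. (\<Sum>s\<in>{0,1,2}. D s * plane_basis s j) = 0" by (simp add: p_def fun_eq_iff)
    then show False using plane_basis_indep t(1) D(2) by blast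
  qed
  moreover have "\<forall>j. p j \<in> S" "\<forall>j. n \<le> j \<longrightarrow> p j = 0" using plane_vector_in_S[OF D(1)] by (simp_all add: p_def)
  ultimately obtain g \<kappa> where g: "g \<in> E" "\<kappa> \<noteq> 0" "\<forall>j. p j = \<kappa> * A g j" using obtain_point by blast
  have Ag: "A g = (\<lambda>j. (1 / \<kappa>) * p j)" using g by (auto simp: fun_eq_iff)
  have "A g \<in> vspan (A ` Y)" unfolding Ag by (rule vspan_scale[OF pY])
  moreover have "A g \<in> vspan {A a, A b, A f}" unfolding Ag p_def by (rule vspan_scale[OF vspan_plane_basis]) simp
  ultimately show ?thesis using that[OF D g(1,2)] g(3) by (simp add: p_def)
qed

text \<open>A nonzero vector of the line through \<open>v\<close> and \<open>A f\<close> lies in the plane \<open>\<langle>A a, A b, A f\<rangle>\<close>;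
  if it is in the span of \<open>A Y\<close>, then so is an \<open>S\<close>-rational point \<open>g\<close> of the plane. Either \<open>g\<close> is
  on the line, so \<open>g = f\<close>, or subtracting a multiple of \<open>A g\<close> leaves a second vector, which yields
  a second point \<open>h\<close>.\<close>

lemma span_meets_plane:
  assumes Y: "Y \<subseteq> E" and x: "x \<in> vspan {v, A f}" "x \<noteq> (\<lambda>j. 0)" "x \<in> vspan (A ` Y)"
  shows "A f \<in> vspan (A ` Y) \<or> (\<exists>g\<in>E. \<exists>h\<in>E. g \<noteq> h \<and> A g \<in> vspan (A ` Y) \<and> A h \<in> vspan (A ` Y) \<and>
           A g \<in> vspan {A a, A b, A f} \<and> A h \<in> vspan {A a, A b, A f})"
proof -
  let ?K = "{0,1,2::nat}"
  obtain \<alpha> \<beta> where ab': "\<forall>j. x j = \<alpha> * v j + \<beta> * A f j" using x(1) vspan_pair by blast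
  obtain \<gamma> \<delta> where gd: "\<forall>j. v j = \<gamma> * A a j + \<delta> * A b j" using v_coords by blast
  define xc where "xc (s::nat) = (if s = 0 then \<alpha> * \<gamma> else if s = 1 then \<alpha> * \<delta> else \<beta>)" for s
  have xB: "x = (\<lambda>j. \<Sum>s\<in>?K. xc s * plane_basis s j)"
    using ab' gd by (auto simp: fun_eq_iff plane_basis_def xc_def algebra_simps)
  have "\<exists>t\<in>?K. xc t \<noteq> 0" using xB x(2) by auto
  then obtain t where t: "t \<in> ?K" "xc t \<noteq> 0" by blast
  have xY: "(\<lambda>j. \<Sum>s\<in>?K. xc s * plane_basis s j) \<in> vspan (A ` Y)" using x(3) xB by simp
  obtain D g \<kappa> where D: "\<forall>s. D s \<in> S" "D t \<noteq> 0" "\<forall>s. xc s = 0 \<longrightarrow> D s = 0" and g: "g \<in> E" "\<kappa> \<noteq> 0"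
      "\<forall>j. (\<Sum>s\<in>?K. D s * plane_basis s j) = \<kappa> * A g j" "A g \<in> vspan (A ` Y)" "A g \<in> vspan {A a, A b, A f}"
    by (rule plane_point_in_span[where xc = xc, OF Y t xY])
  show ?thesis
  proof (cases "\<exists>\<rho>. x = (\<lambda>j. \<rho> * A g j)")
    case True
    then obtain \<rho> where r: "x = (\<lambda>j. \<rho> * A g j)" by blast
    then have "\<rho> \<noteq> 0" using x(2) by auto
    then have "A g = (\<lambda>j. (1 / \<rho>) * x j)" using r by (auto simp: fun_eq_iff)
    then have "A g \<in> vspan {v, A f}" using vspan_scale[OF x(1), of "1 / \<rho>"] by simp
    then have "g = f" using point_on_vf_line g(1) by blast
    then show ?thesis using g(4) by simp
  next
    case False
    define \<rho> where "\<rho> = xc t / D t"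
    define xc' where "xc' s = xc s - \<rho> * D s" for s
    have x'eq: "(\<lambda>j. \<Sum>s\<in>?K. xc' s * plane_basis s j) = (\<lambda>j. 1 * x j + (- (\<rho> * \<kappa>)) * A g j)"
    proof
      fix j
      have "(\<Sum>s\<in>?K. xc' s * plane_basis s j)
          = (\<Sum>s\<in>?K. xc s * plane_basis s j) - \<rho> * (\<Sum>s\<in>?K. D s * plane_basis s j)"
        by (simp add: xc'_def algebra_simps)
      then show "(\<Sum>s\<in>?K. xc' s * plane_basis s j) = 1 * x j + (- (\<rho> * \<kappa>)) * A g j"
        using g(3) xB by simp
    qed
    have x'Y: "(\<lambda>j. \<Sum>s\<in>?K. xc' s * plane_basis s j) \<in> vspan (A ` Y)"
      unfolding x'eq by (rule vspan_lin_comb[OF x(3) g(4)])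
    have "\<exists>s0\<in>?K. xc' s0 \<noteq> 0"
    proof (rule ccontr)
      assume "\<not> (\<exists>s0\<in>?K. xc' s0 \<noteq> 0)"
      then have "(\<lambda>j. 1 * x j + (- (\<rho> * \<kappa>)) * A g j) = (\<lambda>j. 0)" using x'eq by simp
      then have "x = (\<lambda>j. (\<rho> * \<kappa>) * A g j)" by (auto simp: fun_eq_iff)
      then show False using False by blast
    qed
    then obtain s0 where s0: "s0 \<in> ?K" "xc' s0 \<noteq> 0" by blast
    have xc't: "xc' t = 0" using D(2) by (simp add: xc'_def \<rho>_def)
    obtain D' h \<kappa>' where D': "\<forall>s. D' s \<in> S" "D' s0 \<noteq> 0" "\<forall>s. xc' s = 0 \<longrightarrow> D' s = 0"
      and h: "h \<in> E" "\<kappa>' \<noteq> 0" "\<forall>j. (\<Sum>s\<in>?K. D' s * plane_basis s j) = \<kappa>' * A h j"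
        "A h \<in> vspan (A ` Y)" "A h \<in> vspan {A a, A b, A f}"
      by (rule plane_point_in_span[where xc = xc', OF Y s0 x'Y])
    have "g \<noteq> h"
    proof
      assume "g = h"
      have "(\<Sum>s\<in>?K. (D s - (\<kappa> / \<kappa>') * D' s) * plane_basis s j) = 0" for j
      proof -
        have "(\<Sum>s\<in>?K. (D s - (\<kappa> / \<kappa>') * D' s) * plane_basis s j)
            = (\<Sum>s\<in>?K. D s * plane_basis s j) - (\<kappa> / \<kappa>') * (\<Sum>s\<in>?K. D' s * plane_basis s j)"
          by (simp add: algebra_simps)
        then show ?thesis using g(3) h(2,3) \<open>g = h\<close> by simp
      qed
      then have "\<forall>j. (\<Sum>s\<in>?K. (D s - (\<kappa> / \<kappa>') * D' s) * plane_basis s j) = 0" by blast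
      from plane_basis_indep[OF this t(1)] show False using D(2) D'(3) xc't by simp
    qed
    then show ?thesis using g h by blast
  qed
qed

lemma mcl_L0_f_in_plane:
  assumes "e \<in> mcl A E (L0 \<union> {f})"
  shows "A e \<in> vspan {A a, A b, A f}"
proof -
  have fin: "finite (A ` (L0 \<union> {f}))" using finE mcl_subset L0 fE
    by (metis finite_imageI finite_subset insert_subset sup.commute insert_is_Un)
  have sub: "{A a, A b} \<subseteq> vspan {A a, A b, A f}" by (auto intro: vspan_base)
  have "A ` (L0 \<union> {f}) \<subseteq> vspan {A a, A b, A f}"
  proof
    fix w assume "w \<in> A ` (L0 \<union> {f})"
    then obtain e' where e': "e' \<in> L0 \<union> {f}" "w = A e'" by blast
    show "w \<in> vspan {A a, A b, A f}"
    proof (cases "e' = f")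
      case True then show ?thesis using e' by (auto intro: vspan_base)
    next
      case False
      then have "e' \<in> L0" using e' by simp
      then have "A e' \<in> vspan {A a, A b}" unfolding L0 mcl_def by simp
      then show ?thesis using e' vspan_subset[OF _ sub] by auto
    qed
  qed
  moreover have "A e \<in> vspan (A ` (L0 \<union> {f}))" using assms by (simp add: mcl_def)
  ultimately show ?thesis using vspan_subset[OF fin] by blast
qed

lemma v_in_plane: "v \<in> vspan {A a, A b, A f}"
proof -
  obtain \<gamma> \<delta> where "\<forall>j. v j = \<gamma> * A a j + \<delta> * A b j" using v_coords by blast
  then have "v = (\<lambda>j. \<gamma> * A a j + \<delta> * A b j)" by auto
  moreover have "A a \<in> vspan {A a, A b, A f}" "A b \<in> vspan {A a, A b, A f}" by (auto intro: vspan_base)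
  ultimately show ?thesis using vspan_lin_comb by metis
qed

lemma exists_line_point:
  assumes L: "L \<in> lines_off A E L0 f"
  shows "\<exists>w. w \<noteq> (\<lambda>j. 0) \<and> w \<in> vspan (A ` L) \<and> w \<in> vspan {v, A f}"
proof -
  obtain c d where cd: "c \<in> E" "d \<in> E" "c \<noteq> d" "L = mcl A E {c, d}" "f \<notin> L" "L \<subseteq> E"
    using lines_offE[OF L] by blast
  have LP: "L \<subseteq> mcl A E (L0 \<union> {f})" using L by (simp add: lines_off_def)
  have cP: "A c \<in> vspan {A a, A b, A f}" "A d \<in> vspan {A a, A b, A f}"
    using mcl_L0_f_in_plane LP mem_line[OF cd(1,2)] cd(4) by auto
  define u where "u i = (if i = (0::nat) then A c else if i = 1 then A d else if i = 2 then v else A f)" for i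
  have uW: "\<forall>i\<in>{0,1,2,3}. u i \<in> vspan {A a, A b, A f}"
    using cP v_in_plane by (auto simp: u_def intro: vspan_base)
  have "card {A a, A b, A f} < card {0,1,2,3::nat}" by (auto simp: card_insert_if)
  then have "\<not> lin_indep_fam u {0,1,2,3}" using lin_dependent_if_card_gt_span[OF _ _ _ uW] by simp
  then obtain k i0 where k: "\<forall>j. (\<Sum>i\<in>{0,1,2,3}. k i * u i j) = 0" "i0 \<in> {0,1,2,3::nat}" "k i0 \<noteq> 0"
    unfolding not_lin_indep_fam_iff by auto
  have k': "\<forall>j. k 0 * A c j + k 1 * A d j + k 2 * v j + k 3 * A f j = 0"
    using k(1) by (simp add: u_def add.assoc)
  define w where "w j = k 0 * A c j + k 1 * A d j" for j
  have wnz: "w \<noteq> (\<lambda>j. 0)"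
  proof
    assume w0: "w = (\<lambda>j. 0)"
    then have "k 0 = 0 \<and> k 1 = 0" using two_cols_indep[OF cd(1-3), of "k 0" "k 1"] by (auto simp: w_def fun_eq_iff)
    then have kv: "\<forall>j. k 2 * v j + k 3 * A f j = 0" using k' by simp
    obtain \<gamma> \<delta> where gd: "\<forall>j. v j = \<gamma> * A a j + \<delta> * A b j" using v_coords by blast
    have "\<forall>j. (k 2 * \<gamma>) * A a j + (k 2 * \<delta>) * A b j + k 3 * A f j = 0"
      using kv gd by (simp add: algebra_simps)
    then have z: "k 2 * \<gamma> = 0" "k 2 * \<delta> = 0" "k 3 = 0" using three_cols_indep by blast+
    have "k 2 = 0"
    proof (rule ccontr)
      assume "k 2 \<noteq> 0"
      then have "\<gamma> = 0" "\<delta> = 0" using z by auto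
      then have "v = (\<lambda>j. 0)" using gd by auto
      then show False using v_nonzero by simp
    qed
    then show False using k(2,3) z \<open>k 0 = 0 \<and> k 1 = 0\<close> by auto
  qed
  have "w \<in> vspan {A c, A d}" unfolding vspan_pair w_def by blast
  then have "w \<in> vspan (A ` L)" using vspan_line[OF cd(1,2)] cd(4) by simp
  moreover have "\<forall>j. w j = (- k 2) * v j + (- k 3) * A f j"
    using k' by (simp add: w_def algebra_simps eq_neg_iff_add_eq_0)
  then have "w \<in> vspan {v, A f}" unfolding vspan_pair by blast
  ultimately show ?thesis using wnz by blast
qed

end

section \<open>Transfer of dependence between two fields\<close>

text \<open>Dependence is transferred from the source columns \<open>(A, vL)\<close> to the target columns
  \<open>(A', vL')\<close>; only the source line points need to be nonzero.\<close>

locale PG_bar_pair =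
  s1: PG_bar_data S n A E L0 a b f v + s2: PG_bar_data T n A' E L0 a b f v'
  for S :: "'a::field set" and n and A :: "'e \<Rightarrow> nat \<Rightarrow> 'a" and E L0 a b f v
    and T :: "'b::field set" and A' :: "'e \<Rightarrow> nat \<Rightarrow> 'b" and v' +
  fixes \<sigma> :: "'a \<Rightarrow> 'b" and vL :: "'e set \<Rightarrow> nat \<Rightarrow> 'a" and vL' :: "'e set \<Rightarrow> nat \<Rightarrow> 'b"
  assumes iso: "subfield_iso S T \<sigma>" and A'A: "\<forall>e\<in>E. \<forall>j. A' e j = \<sigma> (A e j)"
    and vL: "\<forall>L\<in>lines_off A E L0 f. vL L \<noteq> (\<lambda>j. 0) \<and> vL L \<in> vspan (A ` L) \<and> vL L \<in> vspan {v, A f}"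
    and vL': "\<forall>L\<in>lines_off A E L0 f. vL' L \<in> vspan (A' ` L) \<and> vL' L \<in> vspan {v', A' f}"
begin

lemma map_col_eq: "e \<in> E \<Longrightarrow> A' e = (\<lambda>j. \<sigma> (A e j))"
  using A'A by auto

lemma vspan_transfer:
  assumes Y: "Y \<subseteq> E" and e: "e \<in> E" and sp: "A e \<in> vspan (A ` Y)"
  shows "A' e \<in> vspan (A' ` Y)"
proof -
  have img: "(\<lambda>e j. \<sigma> (A e j)) ` Y = A' ` Y"
    by (rule image_cong) (use map_col_eq Y in auto)
  have inj: "inj_on (\<lambda>e j. \<sigma> (A e j)) Y"
    using s2.inj_on_cols_subset[OF Y] map_col_eq Y by (simp add: inj_on_def) (metis subsetD)
  have "(\<lambda>j. \<sigma> (A e j)) \<in> vspan ((\<lambda>e j. \<sigma> (A e j)) ` Y)"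
    by (rule subfield_iso.map_vspan_image[OF iso s1.finite_ground_subset[OF Y] s1.inj_on_cols_subset[OF Y] inj])
      (use s1.col_in_S Y e sp in auto)
  then show ?thesis using img map_col_eq[OF e] by simp
qed

lemma dependent_cols_transfer:
  assumes Y: "Y \<subseteq> E" and dep: "\<not> lin_indep_fam A Y"
  shows "\<not> lin_indep_fam A' Y"
proof -
  have "\<not> lin_indep_fam (\<lambda>i j. \<sigma> (A i j)) Y"
    by (rule subfield_iso.not_lin_indep_fam_map[OF iso s1.finite_ground_subset[OF Y] _ dep]) (use s1.col_in_S Y in auto)
  moreover have "lin_indep_fam (\<lambda>i j. \<sigma> (A i j)) Y \<longleftrightarrow> lin_indep_fam A' Y"
    using map_col_eq Y by (intro lin_indep_fam_cong) auto
  ultimately show ?thesis by simp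
qed

lemma vspan_line_transfer:
  assumes L: "L \<in> lines_off A E L0 f" and Y: "Y \<subseteq> E" and sub: "A ` L \<subseteq> vspan (A ` Y)"
  shows "vspan (A' ` L) \<subseteq> vspan (A' ` Y)"
proof -
  obtain c d where cd: "c \<in> E" "d \<in> E" "c \<noteq> d" "L = mcl A E {c, d}" "L \<subseteq> E"
    using s1.lines_offE[OF L] by blast
  have "A c \<in> vspan (A ` Y)" "A d \<in> vspan (A ` Y)"
    using sub s1.mem_line[OF cd(1,2)] cd(4) by auto
  then have "A' c \<in> vspan (A' ` Y)" "A' d \<in> vspan (A' ` Y)"
    using vspan_transfer[OF Y] cd by auto
  then have cd_Y: "vspan {A' c, A' d} \<subseteq> vspan (A' ` Y)" by (intro vspan_subset) auto
  have "A' e \<in> vspan {A' c, A' d}" if "e \<in> L" for e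
    using vspan_transfer[of "{c, d}" e] that cd by (auto simp: mcl_def)
  moreover have "finite L" using cd(5) s2.finE finite_subset by blast
  ultimately have "vspan (A' ` L) \<subseteq> vspan {A' c, A' d}" by (intro vspan_subset) auto
  then show ?thesis using cd_Y by blast
qed

lemma dependent_one_line:
  assumes L: "L \<in> lines_off A E L0 f" and Y: "Y \<subseteq> E" and xY: "vL L \<in> vspan (A ` Y)"
  shows "\<not> lin_indep_fam (pgbar_cols A' vL') (Inl ` Y \<union> Inr ` {L})"
proof (rule lin_dependent_if_card_gt_span)
  have fY: "finite Y" using s1.finite_ground_subset[OF Y] .
  then show "finite (A' ` Y)" "finite (Inl ` Y \<union> Inr ` {L})" by simp_all
  show "card (A' ` Y) < card (Inl ` Y \<union> Inr ` {L})"
    using card_image_Inl_Inr[OF fY, of "{L}"] card_image_le[OF fY, of A'] by simp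
  have "A ` L \<subseteq> vspan (A ` Y)" using s1.line_subset_span[OF L _ _ _ Y xY] vL L by blast
  then have "vL' L \<in> vspan (A' ` Y)" using vspan_line_transfer[OF L Y] vL' L by blast
  then show "\<forall>i\<in>Inl ` Y \<union> Inr ` {L}. pgbar_cols A' vL' i \<in> vspan (A' ` Y)"
    using fY by (auto simp: pgbar_cols_def intro: vspan_base)
qed

text \<open>If \<open>A f\<close> lies in the span of \<open>A Y\<close>, then so do \<open>v\<close>, \<open>vL L\<close> and \<open>vL L'\<close> after adding the
  single vector \<open>v'\<close>; this leaves too few dimensions for \<open>Y\<close> and two further columns.\<close>

lemma dependent_two_lines_if_f_in_span:
  assumes L: "L \<in> lines_off A E L0 f" "L' \<in> lines_off A E L0 f" "L \<noteq> L'"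
    and Y: "Y \<subseteq> E" and fA: "A f \<in> vspan (A ` Y)"
  shows "\<not> lin_indep_fam (pgbar_cols A' vL') (Inl ` Y \<union> Inr ` {L, L'})"
proof -
  have fY: "finite Y" using s1.finite_ground_subset[OF Y] .
  have ci: "card (Inl ` Y \<union> Inr ` {L, L'}) = card Y + 2"
    using card_image_Inl_Inr[OF fY, of "{L, L'}"] L(3) by simp
  have fY': "A' f \<in> vspan (A' ` Y)" using vspan_transfer[OF Y s1.fE fA] .
  define W where "W = insert v' (A' ` Y)"
  have fW: "finite W" using fY by (simp add: W_def)
  have cW: "card W < card (Inl ` Y \<union> Inr ` {L, L'})"
  proof -
    have "card W \<le> Suc (card (A' ` Y))" unfolding W_def using fY by (simp add: card_insert_if)
    moreover have "card (A' ` Y) \<le> card Y" using card_image_le[OF fY] .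
    ultimately show ?thesis using ci by simp
  qed
  have YW: "A' ` Y \<subseteq> vspan W" using fW by (auto simp: W_def intro: vspan_base)
  have "vspan (A' ` Y) \<subseteq> vspan W" using YW fY by (intro vspan_subset) auto
  then have "{v', A' f} \<subseteq> vspan W" using fY' fW by (auto simp: W_def intro: vspan_base)
  then have lW: "vspan {v', A' f} \<subseteq> vspan W" by (intro vspan_subset) auto
  show ?thesis
  proof (rule lin_dependent_if_card_gt_span[OF fW _ cW])
    show "finite (Inl ` Y \<union> Inr ` {L, L'})" using fY by simp
    show "\<forall>i\<in>Inl ` Y \<union> Inr ` {L, L'}. pgbar_cols A' vL' i \<in> vspan W"
      using YW lW vL' L by (auto simp: pgbar_cols_def)
  qed
qed

text \<open>Otherwise two points \<open>g, h\<close> of the plane \<open>cl(L0 \<union> {f})\<close> lie in the span of \<open>A Y\<close>. The four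
  vectors \<open>vL' L, vL' L', A' g, A' h\<close> of the 3-dimensional plane are dependent, and as \<open>A' g, A' h\<close>
  are independent, the dependence involves a line column.\<close>

lemma dependent_two_lines_if_plane_points:
  assumes L: "L \<in> lines_off A E L0 f" "L' \<in> lines_off A E L0 f" "L \<noteq> L'" and Y: "Y \<subseteq> E"
    and gh: "g \<in> E" "h \<in> E" "g \<noteq> h" "A g \<in> vspan (A ` Y)" "A h \<in> vspan (A ` Y)"
      "A g \<in> vspan {A a, A b, A f}" "A h \<in> vspan {A a, A b, A f}"
  shows "\<not> lin_indep_fam (pgbar_cols A' vL') (Inl ` Y \<union> Inr ` {L, L'})"
proof -
  have fY: "finite Y" using s1.finite_ground_subset[OF Y] .
  have abf: "{a, b, f} \<subseteq> E" using s1.ab s1.fE by auto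
  have g': "A' g \<in> vspan (A' ` Y)" "A' h \<in> vspan (A' ` Y)"
    using vspan_transfer[OF Y] gh by auto
  have g'': "A' g \<in> vspan {A' a, A' b, A' f}" "A' h \<in> vspan {A' a, A' b, A' f}"
    using vspan_transfer[OF abf] gh by auto
  have lP: "vspan {v', A' f} \<subseteq> vspan {A' a, A' b, A' f}"
    using s2.v_in_plane by (intro vspan_subset) (auto intro: vspan_base)
  define u where "u i = (if i = (0::nat) then vL' L else if i = 1 then vL' L' else if i = 2 then A' g else A' h)" for i
  have uW: "\<forall>i\<in>{0,1,2,3}. u i \<in> vspan {A' a, A' b, A' f}"
    using g'' lP vL' L by (auto simp: u_def)
  have "card {A' a, A' b, A' f} < card {0,1,2,3::nat}" by (auto simp: card_insert_if)
  then have "\<not> lin_indep_fam u {0,1,2,3}" using lin_dependent_if_card_gt_span[OF _ _ _ uW] by simp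
  then obtain k i0 where k: "\<forall>j. (\<Sum>i\<in>{0,1,2,3}. k i * u i j) = 0" "i0 \<in> {0,1,2,3::nat}" "k i0 \<noteq> 0"
    unfolding not_lin_indep_fam_iff by auto
  have k': "\<forall>j. k 0 * vL' L j + k 1 * vL' L' j + (k 2 * A' g j + k 3 * A' h j) = 0"
    using k(1) by (simp add: u_def add.assoc)
  have k01: "k 0 \<noteq> 0 \<or> k 1 \<noteq> 0"
  proof (rule ccontr)
    assume "\<not> (k 0 \<noteq> 0 \<or> k 1 \<noteq> 0)"
    then have "\<forall>j. k 2 * A' g j + k 3 * A' h j = 0" using k' by simp
    then have "k 2 = 0 \<and> k 3 = 0" using s2.two_cols_indep[OF gh(1-3)] by blast
    then show False using k(2,3) \<open>\<not> (k 0 \<noteq> 0 \<or> k 1 \<noteq> 0)\<close> by auto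
  qed
  have "(\<lambda>j. k 2 * A' g j + k 3 * A' h j) \<in> vspan (A' ` Y)" using g' by (rule vspan_lin_comb)
  then obtain ay where ay: "\<forall>j. k 2 * A' g j + k 3 * A' h j = (\<Sum>y\<in>Y. ay y * A' y j)"
    unfolding s2.vspan_cols_iff[OF Y] by auto
  define C where "C = case_sum ay (\<lambda>M. if M = L then k 0 else k 1)"
  have "\<forall>j. (\<Sum>i\<in>Inl ` Y \<union> Inr ` {L, L'}. C i * pgbar_cols A' vL' i j) = 0"
  proof
    fix j
    have "(\<Sum>i\<in>Inl ` Y \<union> Inr ` {L, L'}. C i * pgbar_cols A' vL' i j)
        = (\<Sum>y\<in>Y. ay y * A' y j) + (k 0 * vL' L j + k 1 * vL' L' j)"
      using sum_pgbar_cols[OF fY, of "{L, L'}" C A' vL' j] L(3) by (simp add: C_def)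
    then show "(\<Sum>i\<in>Inl ` Y \<union> Inr ` {L, L'}. C i * pgbar_cols A' vL' i j) = 0"
      using ay k' by (simp add: add.commute)
  qed
  moreover have "\<exists>i\<in>Inl ` Y \<union> Inr ` {L, L'}. C i \<noteq> 0"
    using k01 L(3) by (auto simp: C_def)
  ultimately show ?thesis unfolding not_lin_indep_fam_iff by blast
qed

lemma dependent_two_lines:
  assumes L: "L \<in> lines_off A E L0 f" "L' \<in> lines_off A E L0 f" "L \<noteq> L'"
    and Y: "Y \<subseteq> E"
    and rel: "\<forall>j. (\<Sum>y\<in>Y. cy y * A y j) + cL * vL L j + cL' * vL L' j = 0"
    and c0: "cL \<noteq> 0" "cL' \<noteq> 0"
  shows "\<not> lin_indep_fam (pgbar_cols A' vL') (Inl ` Y \<union> Inr ` {L, L'})"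
proof -
  define x where "x j = cL * vL L j + cL' * vL L' j" for j
  have "\<forall>j. (\<Sum>y\<in>Y. cy y * A y j) + 1 * x j = 0" using rel by (simp add: x_def add.assoc)
  then have xY: "x \<in> vspan (A ` Y)" by (rule s1.vspan_cols_of_relation[OF Y _ one_neq_zero])
  have xl: "x \<in> vspan {v, A f}" unfolding x_def using vL L by (intro vspan_lin_comb) auto
  have xnz: "x \<noteq> (\<lambda>j. 0)"
  proof
    assume "x = (\<lambda>j. 0)"
    then have "vL L = (\<lambda>j. (- cL' / cL) * vL L' j)" using c0
      by (auto simp: x_def fun_eq_iff field_simps dest!: fun_cong eq_neg_iff_add_eq_0[THEN iffD2])
    then have "parallel (vL L) (vL L')" unfolding parallel_def by blast
    then have "L = L'" using s1.lines_off_eq_if_parallel[OF L(1) _ _ _ L(2)] vL L by blast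
    then show False using L(3) by simp
  qed
  from s1.span_meets_plane[OF Y xl xnz xY] show ?thesis
    using dependent_two_lines_if_f_in_span[OF L Y] dependent_two_lines_if_plane_points[OF L Y] by blast
qed

lemma dependent_many_lines:
  assumes Z: "Z \<subseteq> lines_off A E L0 f" "3 \<le> card Z"
  shows "\<not> lin_indep_fam (pgbar_cols A' vL') (Inr ` Z)"
proof -
  obtain T3 where T3: "T3 \<subseteq> Z" "card T3 = 3" using Z(2) by (meson obtain_subset_with_card_n)
  then have fT: "finite T3" using card.infinite by fastforce
  have "\<not> lin_indep_fam (pgbar_cols A' vL') (Inr ` T3)"
  proof (rule lin_dependent_if_card_gt_span)
    show "finite {v', A' f}" "finite (Inr ` T3)" using fT by simp_all
    have "card {v', A' f} \<le> 2" by (simp add: card_insert_if)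
    then show "card {v', A' f} < card (Inr ` T3)" using T3 by (simp add: card_image)
    show "\<forall>i\<in>Inr ` T3. pgbar_cols A' vL' i \<in> vspan {v', A' f}"
      using T3 Z vL' by (auto simp: pgbar_cols_def)
  qed
  then show ?thesis using lin_indep_fam_subset[of _ "Inr ` Z" "Inr ` T3"] T3(1) by blast
qed

lemma dependent_few_lines:
  assumes Y: "Y \<subseteq> E" and Z: "Z \<subseteq> lines_off A E L0 f" "\<not> 3 \<le> card Z"
    and rel: "\<forall>j. (\<Sum>y\<in>Y. cy y * A y j) + (\<Sum>L\<in>Z. cz L * vL L j) = 0" and nz: "\<exists>L\<in>Z. cz L \<noteq> 0"
  shows "\<not> lin_indep_fam (pgbar_cols A' vL') (Inl ` Y \<union> Inr ` Z)"
proof -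
  have one: "\<not> lin_indep_fam (pgbar_cols A' vL') (Inl ` Y \<union> Inr ` Z)"
    if L: "L \<in> Z" "cz L \<noteq> 0" "\<forall>j. (\<Sum>y\<in>Y. cy y * A y j) + cz L * vL L j = 0" for L
  proof -
    have "vL L \<in> vspan (A ` Y)" using s1.vspan_cols_of_relation[OF Y L(3,2)] .
    then have "\<not> lin_indep_fam (pgbar_cols A' vL') (Inl ` Y \<union> Inr ` {L})"
      using dependent_one_line[OF _ Y] L(1) Z(1) by blast
    then show ?thesis using lin_indep_fam_subset[of _ _ "Inl ` Y \<union> Inr ` {L}"] L(1) by blast
  qed
  have "finite Z" using s1.finite_lines_off Z(1) finite_subset by blast
  then have "card Z \<noteq> 0" using nz by auto
  then have "card Z = 1 \<or> card Z = 2" using Z(2) by linarith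
  then consider L where "Z = {L}" | L L' where "Z = {L, L'}" "L \<noteq> L'"
    by (metis card_1_singletonE card_2_iff)
  then show ?thesis
  proof cases
    case (1 L)
    then show ?thesis using one[of L] rel nz by simp
  next
    case (2 L L')
    then have rel2: "\<forall>j. (\<Sum>y\<in>Y. cy y * A y j) + cz L * vL L j + cz L' * vL L' j = 0"
      using rel by (simp add: add.assoc)
    consider "cz L = 0" | "cz L' = 0" | "cz L \<noteq> 0" "cz L' \<noteq> 0" by blast
    then show ?thesis
    proof cases
      case 1
      then show ?thesis using one[of L'] rel2 nz 2 by auto
    next
      case 2
      then show ?thesis using one[of L] rel2 nz \<open>Z = {L, L'}\<close> by auto
    next
      case 3
      then show ?thesis using dependent_two_lines[OF _ _ \<open>L \<noteq> L'\<close> Y rel2] Z(1) \<open>Z = {L, L'}\<close> by simp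
    qed
  qed
qed

theorem dependent_transfer:
  assumes X: "X \<subseteq> pgbar_ground E (lines_off A E L0 f)"
    and dep: "\<not> lin_indep_fam (pgbar_cols A vL) X"
  shows "\<not> lin_indep_fam (pgbar_cols A' vL') X"
proof -
  obtain Y Z where Y: "Y \<subseteq> E" and Z: "Z \<subseteq> lines_off A E L0 f" and XYZ: "X = Inl ` Y \<union> Inr ` Z"
    using X by (rule subset_pgbar_groundE)
  have fY: "finite Y" using s1.finite_ground_subset[OF Y] .
  have fZ: "finite Z" using s1.finite_lines_off Z finite_subset by blast
  obtain c x0 where c: "\<forall>j. (\<Sum>x\<in>X. c x * pgbar_cols A vL x j) = 0" "x0 \<in> X" "c x0 \<noteq> 0"
    using dep fY fZ XYZ unfolding not_lin_indep_fam_iff by auto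
  have rel: "\<forall>j. (\<Sum>y\<in>Y. c (Inl y) * A y j) + (\<Sum>L\<in>Z. c (Inr L) * vL L j) = 0"
    using c(1) sum_pgbar_cols[OF fY fZ, of c A vL] XYZ by simp
  show ?thesis
  proof (cases "lin_indep_fam A Y")
    case False
    then have "\<not> lin_indep_fam (pgbar_cols A' vL') (Inl ` Y)"
      using dependent_cols_transfer[OF Y] lin_indep_fam_pgbar_cols_Inl by blast
    then show ?thesis using lin_indep_fam_subset[of _ X "Inl ` Y"] XYZ by blast
  next
    case True
    have Znz: "\<exists>L\<in>Z. c (Inr L) \<noteq> 0"
    proof (rule ccontr)
      assume nz: "\<not> (\<exists>L\<in>Z. c (Inr L) \<noteq> 0)"
      then have "\<forall>j. (\<Sum>y\<in>Y. c (Inl y) * A y j) = 0" using rel by simp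
      then have "\<forall>y\<in>Y. c (Inl y) = 0"
        using True[unfolded lin_indep_fam_def, THEN conjunct2, rule_format, of "\<lambda>y. c (Inl y)"] by blast
      then show False using c(2,3) XYZ nz by auto
    qed
    show ?thesis
    proof (cases "3 \<le> card Z")
      case True
      then have "\<not> lin_indep_fam (pgbar_cols A' vL') (Inr ` Z)" by (rule dependent_many_lines[OF Z])
      then show ?thesis using lin_indep_fam_subset[of _ X "Inr ` Z"] XYZ by blast
    next
      case False
      then show ?thesis using dependent_few_lines[OF Y Z False rel Znz] XYZ by simp
    qed
  qed
qed
end

section \<open>Representing the extension over another field\<close>

definition map_cols :: "('a \<Rightarrow> 'b::zero) \<Rightarrow> ('e \<Rightarrow> nat \<Rightarrow> 'a) \<Rightarrow> 'e set \<Rightarrow> 'e \<Rightarrow> nat \<Rightarrow> 'b" where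
  "map_cols \<sigma> A E e = (if e \<in> E then (\<lambda>j. \<sigma> (A e j)) else (\<lambda>j. 0))"

context PG_rep
begin

context
  fixes T :: "'b::field set" and \<sigma> :: "'a \<Rightarrow> 'b"
  assumes iso: "subfield_iso S T \<sigma>"
begin

lemma map_cols_not_parallel:
  assumes e: "e \<in> E" "e' \<in> E" "e \<noteq> e'"
  shows "\<not> parallel (\<lambda>j. \<sigma> (A e j)) (\<lambda>j. \<sigma> (A e' j))"
proof
  note cS = subfield_closed[OF subfield_iso.subfield_S[OF iso]]
  assume "parallel (\<lambda>j. \<sigma> (A e j)) (\<lambda>j. \<sigma> (A e' j))"
  then obtain c where c: "\<forall>j. \<sigma> (A e j) = c * \<sigma> (A e' j)" unfolding parallel_def by (auto simp: fun_eq_iff)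
  obtain j0 where j0: "A e' j0 \<noteq> 0" using col_nonzero[OF e(2)] by auto
  define c0 where "c0 = A e j0 / A e' j0"
  have c0S: "c0 \<in> S" using col_in_S e cS by (simp add: c0_def)
  have "\<sigma> (A e' j0) \<noteq> 0" using subfield_iso.map_eq_0_iff[OF iso] col_in_S e(2) j0 by simp
  then have "c = \<sigma> (A e j0) / \<sigma> (A e' j0)" using c[rule_format, of j0] by (simp add: field_simps)
  then have cc: "c = \<sigma> c0" using subfield_iso.map_divide[OF iso] col_in_S e by (simp add: c0_def)
  have "A e j = c0 * A e' j" for j
  proof -
    have "\<sigma> (A e j) = \<sigma> (c0 * A e' j)"
      using c[rule_format, of j] cc subfield_iso.map_mult[OF iso] c0S col_in_S e by simp
    then show ?thesis using subfield_iso.map_eq_iff[OF iso] col_in_S e c0S cS by simp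
  qed
  then have "parallel (A e) (A e')" unfolding parallel_def by (intro exI[of _ c0]) (simp add: fun_eq_iff)
  then show False using col_not_parallel e by blast
qed

lemma map_cols_exists_parallel:
  assumes w: "\<forall>j. w j \<in> T" "\<forall>j. n \<le> j \<longrightarrow> w j = 0" "w \<noteq> (\<lambda>j. 0)"
  shows "\<exists>e\<in>E. parallel w (\<lambda>j. \<sigma> (A e j))"
proof -
  interpret inv: subfield_iso T S "inv_into S \<sigma>" by (rule subfield_iso.inv[OF iso])
  define w' where "w' j = inv_into S \<sigma> (w j)" for j
  have w'S: "\<forall>j. w' j \<in> S" using w inv.map_in by (simp add: w'_def)
  have w'n: "\<forall>j. n \<le> j \<longrightarrow> w' j = 0" using w inv.map_0 by (simp add: w'_def)
  have "w' \<noteq> (\<lambda>j. 0)" using w inv.map_eq_0_iff by (auto simp: w'_def fun_eq_iff)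
  then obtain e \<kappa> where e: "e \<in> E" "\<kappa> \<noteq> 0" "\<forall>j. w' j = \<kappa> * A e j" using obtain_point[OF w'S w'n] by blast
  obtain j1 where j1: "A e j1 \<noteq> 0" using col_nonzero[OF e(1)] by auto
  have "\<kappa> = w' j1 / A e j1" using e(3) j1 by simp
  then have \<kappa>S: "\<kappa> \<in> S" using w'S col_in_S e(1) subfield_closed[OF subfield_iso.subfield_S[OF iso]] by simp
  have "w j = \<sigma> \<kappa> * \<sigma> (A e j)" for j
  proof -
    have "w j = \<sigma> (w' j)"
      using w subfield_iso.bij[OF iso] by (simp add: w'_def bij_betw_inv_into_right)
    then show ?thesis using e(3) subfield_iso.map_mult[OF iso] \<kappa>S col_in_S e(1) by simp
  qed
  then have "parallel w (\<lambda>j. \<sigma> (A e j))" unfolding parallel_def by (intro exI[of _ "\<sigma> \<kappa>"]) (simp add: fun_eq_iff)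
  then show ?thesis using e(1) by blast
qed

lemma PG_rep_map_cols: "PG_rep T n (map_cols \<sigma> A E) E"
proof -
  have "is_PG_rep T n (map_cols \<sigma> A E) E"
    unfolding is_PG_rep_def
  proof (intro conjI ballI allI impI)
    fix e j assume e: "e \<in> E"
    show "map_cols \<sigma> A E e j \<in> T" using e col_in_S subfield_iso.map_in[OF iso] by (simp add: map_cols_def)
    show "n \<le> j \<Longrightarrow> map_cols \<sigma> A E e j = 0"
      using e col_zero_beyond subfield_iso.map_0[OF iso] by (simp add: map_cols_def)
    show "map_cols \<sigma> A E e \<noteq> (\<lambda>j. 0)"
      using e col_nonzero col_in_S subfield_iso.map_eq_0_iff[OF iso] by (auto simp: map_cols_def fun_eq_iff)
  next
    fix e e' assume "e \<in> E" "e' \<in> E" "e \<noteq> e'"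
    then show "\<not> parallel (map_cols \<sigma> A E e) (map_cols \<sigma> A E e')"
      using map_cols_not_parallel by (simp add: map_cols_def)
  next
    fix w :: "nat \<Rightarrow> 'b"
    assume "(\<forall>j. w j \<in> T) \<and> (\<forall>j. n \<le> j \<longrightarrow> w j = 0) \<and> w \<noteq> (\<lambda>j. 0)"
    then show "\<exists>e\<in>E. parallel w (map_cols \<sigma> A E e)"
      using map_cols_exists_parallel by (simp add: map_cols_def)
  qed
  then show ?thesis using subfield_iso.subfield_T[OF iso] finE by (intro PG_rep.intro)
qed

end

end

lemma mcl_subset_map:
  assumes iso: "subfield_iso S T \<sigma>" and P1: "PG_rep S n A E" and P2: "PG_rep T n A' E"
    and A'A: "\<forall>e\<in>E. \<forall>j. A' e j = \<sigma> (A e j)" and X: "X \<subseteq> E"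
  shows "mcl A E X \<subseteq> mcl A' E X"
proof
  interpret p1: PG_rep S n A E by (rule P1)
  interpret p2: PG_rep T n A' E by (rule P2)
  fix e assume e: "e \<in> mcl A E X"
  then have eE: "e \<in> E" and sp: "A e \<in> vspan (A ` X)" by (auto simp: mcl_def)
  have eqX: "\<And>e. e \<in> X \<Longrightarrow> (\<lambda>j. \<sigma> (A e j)) = A' e" using A'A X by (auto simp: fun_eq_iff)
  have img: "(\<lambda>e j. \<sigma> (A e j)) ` X = A' ` X"
    by (rule image_cong) (use eqX in auto)
  have inj: "inj_on (\<lambda>e j. \<sigma> (A e j)) X"
    using p2.inj_on_cols_subset[OF X] inj_on_cong[of X "\<lambda>e j. \<sigma> (A e j)" A'] eqX by simp
  have "(\<lambda>j. \<sigma> (A e j)) \<in> vspan ((\<lambda>e j. \<sigma> (A e j)) ` X)"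
    by (rule subfield_iso.map_vspan_image[OF iso p1.finite_ground_subset[OF X] p1.inj_on_cols_subset[OF X] inj])
      (use p1.col_in_S X eE sp in auto)
  moreover have "(\<lambda>j. \<sigma> (A e j)) = A' e" using A'A eE by (auto simp: fun_eq_iff)
  ultimately have "A' e \<in> vspan (A' ` X)" using img by simp
  then show "e \<in> mcl A' E X" using eE by (simp add: mcl_def)
qed

lemma lines_off_cong:
  assumes mcl: "\<And>X. X \<subseteq> E \<Longrightarrow> mcl A' E X = mcl A E X" and "L0 \<subseteq> E" "f \<in> E"
  shows "lines_off A' E L0 f = lines_off A E L0 f"
proof -
  have "is_line A' E L \<longleftrightarrow> is_line A E L" for L
    unfolding is_line_def using mcl by (metis empty_subsetI insert_subset)
  moreover have "mcl A' E (L0 \<union> {f}) = mcl A E (L0 \<union> {f})" using mcl assms(2,3) by simp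
  ultimately show ?thesis unfolding lines_off_def by simp
qed

context PG_bar_data
begin

lemma L0_subset: "L0 \<subseteq> E"
  using L0 mcl_subset by simp

lemma exists_pgbar_cols:
  assumes zero: "\<forall>e j. n \<le> j \<longrightarrow> A e j = 0"
  obtains w where "\<forall>L\<in>lines_off A E L0 f. w L \<noteq> (\<lambda>j. 0) \<and> w L \<in> vspan (A ` L) \<and> w L \<in> vspan {v, A f}"
    "\<forall>x j. n \<le> j \<longrightarrow> pgbar_cols A w x j = 0"
proof -
  define w where "w L = (if L \<in> lines_off A E L0 f
      then (SOME x. x \<noteq> (\<lambda>j. 0) \<and> x \<in> vspan (A ` L) \<and> x \<in> vspan {v, A f}) else (\<lambda>j. 0))" for L
  have w: "w L \<noteq> (\<lambda>j. 0) \<and> w L \<in> vspan (A ` L) \<and> w L \<in> vspan {v, A f}"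
    if "L \<in> lines_off A E L0 f" for L
    using someI_ex[OF exists_line_point[OF that]] that by (simp add: w_def)
  have "\<forall>j. n \<le> j \<longrightarrow> v j = 0"
    using zero L0_subset finite_ground_subset[OF L0_subset] vsp
    by (intro allI impI vspan_zero_beyond[of "A ` L0"]) auto
  then have "w L j = 0" if "n \<le> j" for L j
    using w zero that vspan_zero_beyond[of "{v, A f}" "w L" j] by (cases "L \<in> lines_off A E L0 f") (auto simp: w_def)
  then have "\<forall>x j. n \<le> j \<longrightarrow> pgbar_cols A w x j = 0"
    using zero by (auto simp: pgbar_cols_def split: sum.split)
  then show ?thesis using that w by blast
qed

context
  fixes T :: "'b::field set" and \<sigma> :: "'a \<Rightarrow> 'b" and u :: 'b
  assumes iso: "subfield_iso S T \<sigma>" and u: "u \<notin> T"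
begin

lemma mcl_map_cols: "X \<subseteq> E \<Longrightarrow> mcl (map_cols \<sigma> A E) E X = mcl A E X"
proof -
  interpret p2: PG_rep T n "map_cols \<sigma> A E" E by (rule PG_rep_map_cols[OF iso])
  have AA': "\<forall>e\<in>E. \<forall>j. A e j = inv_into S \<sigma> (map_cols \<sigma> A E e j)"
    using col_in_S subfield_iso.bij[OF iso] by (simp add: map_cols_def bij_betw_inv_into_left)
  assume X: "X \<subseteq> E"
  have "mcl A E X \<subseteq> mcl (map_cols \<sigma> A E) E X"
    by (rule mcl_subset_map[OF iso PG_rep_axioms p2.PG_rep_axioms _ X]) (simp add: map_cols_def)
  moreover have "mcl (map_cols \<sigma> A E) E X \<subseteq> mcl A E X"
    by (rule mcl_subset_map[OF subfield_iso.inv[OF iso] p2.PG_rep_axioms PG_rep_axioms AA' X])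
  ultimately show ?thesis by (rule equalityI[rotated])
qed

lemma lines_off_map_cols: "lines_off (map_cols \<sigma> A E) E L0 f = lines_off A E L0 f"
  using lines_off_cong[OF mcl_map_cols L0_subset fE] .

text \<open>Since \<open>u \<notin> T\<close>, the point \<open>A' a + u A' b\<close> of the line \<open>L0\<close> is not a point of the
  \<open>T\<close>-representation, so it can play the role of \<open>v\<close> over the target field.\<close>

lemma v_map_not_parallel:
  assumes e: "e \<in> L0"
  shows "\<not> parallel (\<lambda>j. map_cols \<sigma> A E a j + u * map_cols \<sigma> A E b j) (map_cols \<sigma> A E e)"
proof
  let ?A' = "map_cols \<sigma> A E"
  interpret p2: PG_rep T n ?A' E by (rule PG_rep_map_cols[OF iso])
  note cS = subfield_closed[OF S]
  assume par: "parallel (\<lambda>j. ?A' a j + u * ?A' b j) (?A' e)"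
  have eE: "e \<in> E" using e L0_subset by auto
  obtain x y where xy: "\<forall>j. A e j = x * A a j + y * A b j"
    using e unfolding L0 mcl_pair by blast
  then have "\<forall>j. A e j = x * A a j + y * A b j + 0 * A f j" by simp
  then have xyS: "x \<in> S" "y \<in> S" using coords_in_subfield col_in_S[OF eE] by blast+
  have A'e: "\<forall>j. ?A' e j = \<sigma> x * ?A' a j + \<sigma> y * ?A' b j"
    using xy xyS eE ab col_in_S cS subfield_iso.map_add[OF iso] subfield_iso.map_mult[OF iso]
    by (simp add: map_cols_def)
  obtain c where c: "\<forall>j. ?A' a j + u * ?A' b j = c * ?A' e j" using par unfolding parallel_def by (auto simp: fun_eq_iff)
  have "\<forall>j. (1 - c * \<sigma> x) * ?A' a j + (u - c * \<sigma> y) * ?A' b j = 0"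
    using c A'e by (simp add: algebra_simps)
  then have z: "1 - c * \<sigma> x = 0" "u - c * \<sigma> y = 0" using p2.two_cols_indep[OF ab(1-3)] by blast+
  then have "\<sigma> x \<noteq> 0" by auto
  then have "u = \<sigma> y / \<sigma> x" using z by (simp add: field_simps)
  also have "\<dots> = \<sigma> (y / x)" using subfield_iso.map_divide[OF iso] xyS by simp
  finally show False using u subfield_iso.map_in[OF iso] xyS cS by simp
qed

lemma PG_bar_data_map_cols:
  "PG_bar_data T n (map_cols \<sigma> A E) E L0 a b f (\<lambda>j. map_cols \<sigma> A E a j + u * map_cols \<sigma> A E b j)"
proof -
  let ?A' = "map_cols \<sigma> A E"
  interpret p2: PG_rep T n ?A' E by (rule PG_rep_map_cols[OF iso])
  have fin: "finite (?A' ` L0)" using L0_subset finE finite_subset by blast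
  have "?A' a \<in> vspan (?A' ` L0)" "?A' b \<in> vspan (?A' ` L0)"
    using ab_in_L0 fin by (auto intro: vspan_base)
  from vspan_lin_comb[OF this, of 1 u]
  have "(\<lambda>j. ?A' a j + u * ?A' b j) \<in> vspan (?A' ` L0)" by simp
  moreover have "L0 = mcl ?A' E {a, b}" using L0 ab mcl_map_cols by simp
  ultimately show ?thesis
    using ab fE fL0 v_map_not_parallel p2.PG_rep_axioms by (intro PG_bar_data.intro PG_bar_data_axioms.intro) auto
qed

lemma exists_PG_bar_pair:
  assumes vL: "\<forall>L\<in>lines_off A E L0 f. vL L \<noteq> (\<lambda>j. 0) \<and> vL L \<in> vspan (A ` L) \<and> vL L \<in> vspan {v, A f}"
  obtains w where
    "PG_bar_pair S n A E L0 a b f v T (map_cols \<sigma> A E)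
       (\<lambda>j. map_cols \<sigma> A E a j + u * map_cols \<sigma> A E b j) \<sigma> vL w"
    "PG_bar_pair T n (map_cols \<sigma> A E) E L0 a b f (\<lambda>j. map_cols \<sigma> A E a j + u * map_cols \<sigma> A E b j)
       S A v (inv_into S \<sigma>) w vL"
    "\<forall>x j. n \<le> j \<longrightarrow> pgbar_cols (map_cols \<sigma> A E) w x j = 0"
proof -
  let ?A' = "map_cols \<sigma> A E" and ?v' = "\<lambda>j. map_cols \<sigma> A E a j + u * map_cols \<sigma> A E b j"
  interpret s2: PG_bar_data T n ?A' E L0 a b f ?v' by (rule PG_bar_data_map_cols)
  have "\<forall>e j. n \<le> j \<longrightarrow> ?A' e j = 0"
    using col_zero_beyond subfield_iso.map_0[OF iso] by (simp add: map_cols_def)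
  then obtain w where w: "\<forall>L\<in>lines_off ?A' E L0 f. w L \<noteq> (\<lambda>j. 0) \<and> w L \<in> vspan (?A' ` L) \<and> w L \<in> vspan {?v', ?A' f}"
      and zero: "\<forall>x j. n \<le> j \<longrightarrow> pgbar_cols ?A' w x j = 0"
    by (rule s2.exists_pgbar_cols)
  have "PG_bar_pair S n A E L0 a b f v T ?A' ?v' \<sigma> vL w"
  proof (intro PG_bar_pair.intro PG_bar_data_axioms s2.PG_bar_data_axioms PG_bar_pair_axioms.intro iso vL)
    show "\<forall>e\<in>E. \<forall>j. ?A' e j = \<sigma> (A e j)" by (simp add: map_cols_def)
    show "\<forall>L\<in>lines_off A E L0 f. w L \<in> vspan (?A' ` L) \<and> w L \<in> vspan {?v', ?A' f}"
      using w lines_off_map_cols by simp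
  qed
  moreover have "PG_bar_pair T n ?A' E L0 a b f ?v' S A v (inv_into S \<sigma>) w vL"
  proof (intro PG_bar_pair.intro PG_bar_data_axioms s2.PG_bar_data_axioms PG_bar_pair_axioms.intro
      subfield_iso.inv[OF iso])
    show "\<forall>e\<in>E. \<forall>j. A e j = inv_into S \<sigma> (?A' e j)"
      using col_in_S subfield_iso.bij[OF iso] by (simp add: map_cols_def bij_betw_inv_into_left)
    show "\<forall>L\<in>lines_off ?A' E L0 f. w L \<noteq> (\<lambda>j. 0) \<and> w L \<in> vspan (?A' ` L) \<and> w L \<in> vspan {?v', ?A' f}"
      using w by simp
    show "\<forall>L\<in>lines_off ?A' E L0 f. vL L \<in> vspan (A ` L) \<and> vL L \<in> vspan {v, A f}"
      using vL lines_off_map_cols by simp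
  qed
  ultimately show ?thesis using that zero by blast
qed

end

end

lemma pgbar_lin_indep_iff:
  assumes "PG_bar_pair S n A E L0 a b f v T A' v' \<sigma> vL vL'"
    and "PG_bar_pair T n A' E L0 a b f v' S A v \<tau> vL' vL"
    and "lines_off A' E L0 f = lines_off A E L0 f"
    and "X \<subseteq> pgbar_ground E (lines_off A E L0 f)"
  shows "lin_indep_fam (pgbar_cols A vL) X \<longleftrightarrow> lin_indep_fam (pgbar_cols A' vL') X"
  using PG_bar_pair.dependent_transfer[OF assms(1,4)] PG_bar_pair.dependent_transfer[OF assms(2)] assms(3,4)
  by auto

theorem lemma4p2:
  fixes q n :: nat and S :: "'a::field set" and A :: "'e \<Rightarrow> nat \<Rightarrow> 'a"
    and E L0 :: "'e set" and v :: "nat \<Rightarrow> 'a" and f :: 'e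
    and vL :: "'e set \<Rightarrow> nat \<Rightarrow> 'a"
  assumes q: "\<exists>p k. prime p \<and> 0 < k \<and> q = p ^ k"
    and n: "3 \<le> n"
    and S: "subfield S" "card S = q"
    and E: "finite E" "is_PG_rep S n A E"
    and L0: "is_line A E L0"
    and v: "v \<in> vspan (A ` L0)" "\<forall>e\<in>L0. \<not> parallel v (A e)"
    and f: "f \<in> E - L0"
    and vL: "\<forall>L\<in>lines_off A E L0 f.
               vL L \<noteq> (\<lambda>j. 0) \<and> vL L \<in> vspan (A ` L) \<and> vL L \<in> vspan {v, A f}"
  shows "\<forall>T :: 'b::field set. subfield T \<and> card T = q \<and> T \<noteq> UNIV \<longrightarrow>
           (\<exists>(\<phi> :: ('e + 'e set) \<Rightarrow> nat \<Rightarrow> 'b) m.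
              (\<forall>x j. m \<le> j \<longrightarrow> \<phi> x j = 0) \<and>
              (\<forall>X \<subseteq> pgbar_ground E (lines_off A E L0 f).
                 lin_indep_fam (pgbar_cols A vL) X \<longleftrightarrow> lin_indep_fam \<phi> X))"
proof (intro allI impI)
  fix T :: "'b::field set"
  assume T: "subfield T \<and> card T = q \<and> T \<noteq> UNIV"
  obtain p k where pk: "prime p" "0 < k" "q = p ^ k" using q by blast
  obtain \<sigma> where iso: "subfield_iso S T \<sigma>"
    using finite_subfield_iso[OF S, of T p k] T pk by blast
  obtain u where u: "u \<notin> T" using T by blast
  obtain a b where ab: "a \<in> E" "b \<in> E" "a \<noteq> b" "L0 = mcl A E {a, b}"
    using L0 by (auto simp: is_line_def)
  interpret PG_bar_data S n A E L0 a b f v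
    using S E ab f v by (intro PG_bar_data.intro PG_rep.intro PG_bar_data_axioms.intro) auto
  obtain w where pairs: "PG_bar_pair S n A E L0 a b f v T (map_cols \<sigma> A E)
       (\<lambda>j. map_cols \<sigma> A E a j + u * map_cols \<sigma> A E b j) \<sigma> vL w"
      "PG_bar_pair T n (map_cols \<sigma> A E) E L0 a b f (\<lambda>j. map_cols \<sigma> A E a j + u * map_cols \<sigma> A E b j)
       S A v (inv_into S \<sigma>) w vL"
    and zero: "\<forall>x j. n \<le> j \<longrightarrow> pgbar_cols (map_cols \<sigma> A E) w x j = 0"
    using exists_PG_bar_pair[OF iso u vL] by blast
  show "\<exists>(\<phi> :: ('e + 'e set) \<Rightarrow> nat \<Rightarrow> 'b) m. (\<forall>x j. m \<le> j \<longrightarrow> \<phi> x j = 0) \<and>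
      (\<forall>X \<subseteq> pgbar_ground E (lines_off A E L0 f). lin_indep_fam (pgbar_cols A vL) X \<longleftrightarrow> lin_indep_fam \<phi> X)"
  proof (intro exI[of _ "pgbar_cols (map_cols \<sigma> A E) w"] exI[of _ n] conjI allI impI)
    fix X assume "X \<subseteq> pgbar_ground E (lines_off A E L0 f)"
    then show "lin_indep_fam (pgbar_cols A vL) X \<longleftrightarrow> lin_indep_fam (pgbar_cols (map_cols \<sigma> A E) w) X"
      using pgbar_lin_indep_iff[OF pairs lines_off_map_cols[OF iso u]] by blast
  qed (use zero in blast)
qed

end
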